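(* Let $g:\mathbb{R}^m\to\overline{\mathbb{R}}$ be a polyhedral function and $(\bar z,\bar\lambda)\in\mathrm{gph}\,\partial g$, and let $g^*$ be its Fenchel conjugate. The following are equivalent: (a) there is a neighborhood $O$ of $(\bar z,\bar\lambda)$ such that for every $(z,\lambda)\in O\cap\mathrm{gph}\,\partial g$, $g$ is strictly twice epi-differentiable at $z$ for $\lambda$; (b) there is a neighborhood $U$ of $(\bar\lambda,\bar z)$ such that for every $(\lambda,z)\in U\cap\mathrm{gph}\,\partial g^*$, $g^*$ is strictly twice epi-differentiable at $\lambda$ for $z$; (c) $\bar\lambda\in\mathrm{ri}\,\partial g(\bar z)$; (d) $\bar z\in\mathrm{ri}\,\partial g^*(\bar\lambda)$.
   Context: A proper function $g:\mathbb{R}^m\to\overline{\mathbb{R}}$ is polyhedral if its epigraph is a polyhedral convex set; $\partial$ is the convex-analysis subdifferential; $\mathrm{ri}$ is relative interior; $g^*(\lambda)=\sup_z\{\langle\lambda,z\rangle-g(z)\}$. For $f:\mathbb{R}^n\to\overline{\mathbb{R}}$, $f(x)$ finite, $v\in\partial f(x)$, $t>0$, set $\Delta_t^2 f(x,v)(w)=\frac{f(x+tw)-f(x)-t\langle v,w\rangle}{\frac12 t^2}$. Epi-convergence means Painlevé–Kuratowski convergence of epigraphs. $f$ is strictly twice epi-differentiable at $\bar x$ for $\bar v\in\partial f(\bar x)$ if the functions $\Delta_t^2 f(x,v)$ epi-converge to some function as $t\searrow 0$ and $(x,v)\to(\bar x,\bar v)$ with $(x,v)\in\mathrm{gph}\,\partial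 f$ and $f(x)\to f(\bar x)$. *)

theory Defs
  imports "HOL-Analysis.Analysis" "HOL-Library.Extended_Real"
begin

definition epi :: "('a \<Rightarrow> ereal) \<Rightarrow> ('a \<times> real) set" where
  "epi f = {(x, r). f x \<le> ereal r}"

definition proper_fun :: "('a \<Rightarrow> ereal) \<Rightarrow> bool" where
  "proper_fun f \<longleftrightarrow> (\<forall>x. f x \<noteq> -\<infinity>) \<and> (\<exists>x. f x \<noteq> \<infinity>)"

definition polyhedral_fun :: "('a::euclidean_space \<Rightarrow> ereal) \<Rightarrow> bool" where
  "polyhedral_fun f \<longleftrightarrow> proper_fun f \<and> polyhedron (epi f)"

definition subdiff :: "('a::real_inner \<Rightarrow> ereal) \<Rightarrow> 'a \<Rightarrow> 'a set" where
  "subdiff f x = {v. \<bar>f x\<bar> \<noteq> \<infinity> \<and> (\<forall>y. f x + ereal (inner v (y - x)) \<le> f y)}"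

definition gph_subdiff :: "('a::real_inner \<Rightarrow> ereal) \<Rightarrow> ('a \<times> 'a) set" where
  "gph_subdiff f = {(x, v). v \<in> subdiff f x}"

definition fconj :: "('a::real_inner \<Rightarrow> ereal) \<Rightarrow> 'a \<Rightarrow> ereal" where
  "fconj g y = (SUP z. ereal (inner y z) - g z)"

definition diffq2 :: "('a::real_inner \<Rightarrow> ereal) \<Rightarrow> 'a \<Rightarrow> 'a \<Rightarrow> real \<Rightarrow> 'a \<Rightarrow> ereal" where
  "diffq2 f x v t w = (f (x + t *\<^sub>R w) - f x - ereal (t * inner v w)) * ereal (2 / t\<^sup>2)"

definition PK_liminf :: "('p \<Rightarrow> 'b::topological_space set) \<Rightarrow> 'p filter \<Rightarrow> 'b set" where
  "PK_liminf C F = {y. \<forall>U. open U \<and> y \<in> U \<longrightarrow> (\<forall>\<^sub>F p in F. C p \<inter> U \<noteq> {})}"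

definition PK_limsup :: "('p \<Rightarrow> 'b::topological_space set) \<Rightarrow> 'p filter \<Rightarrow> 'b set" where
  "PK_limsup C F = {y. \<forall>U. open U \<and> y \<in> U \<longrightarrow> (\<exists>\<^sub>F p in F. C p \<inter> U \<noteq> {})}"

definition PK_converges :: "('p \<Rightarrow> 'b::topological_space set) \<Rightarrow> 'p filter \<Rightarrow> 'b set \<Rightarrow> bool" where
  "PK_converges C F S \<longleftrightarrow> PK_liminf C F = S \<and> PK_limsup C F = S"

text \<open>The parameter filter for strict twice epi-differentiability at xb for vb:
  t tends to 0 from above, (x,v) tends to (xb,vb) within gph of the subdifferential,
  and f x tends to f xb.\<close>
definition strict_epi_filter :: "('a::real_inner \<Rightarrow> ereal) \<Rightarrow> 'a \<Rightarrow> 'a \<Rightarrow> (real \<times> 'a \<times> 'a) filter" where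
  "strict_epi_filter f xb vb =
     inf (at (0, xb, vb) within {(t, x, v). 0 < t \<and> v \<in> subdiff f x})
         (filtercomap (\<lambda>(t, x, v). f x) (nhds (f xb)))"

definition strictly_twice_epi_diff :: "('a::real_inner \<Rightarrow> ereal) \<Rightarrow> 'a \<Rightarrow> 'a \<Rightarrow> bool" where
  "strictly_twice_epi_diff f xb vb \<longleftrightarrow>
     vb \<in> subdiff f xb \<and>
     (\<exists>h. PK_converges (\<lambda>(t, x, v). epi (diffq2 f x v t)) (strict_epi_filter f xb vb) (epi h))"

end

theory Submission
  imports Defs
begin

text \<open>Near a point \<open>x\<close> of its domain, a polyhedral function \<open>f\<close> agrees with \<open>f x\<close> plus
  the support function of \<open>F = \<partial>f x\<close>, so that near \<open>(x, v)\<close> the graph of \<open>\<partial>f\<close>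
  consists of the pairs \<open>(x + u, w)\<close> with \<open>w \<in> F\<close> and \<open>u\<close> normal to \<open>F\<close> at \<open>w\<close>.
  If \<open>v \<in> ri F\<close>, all normal cones at points of \<open>ri F\<close> near \<open>v\<close> are the same subspace
  \<open>K\<close>; the second-order quotients vanish on \<open>K\<close> and blow up off \<open>K\<close>, so they
  epi-converge to the indicator of \<open>K\<close>. If \<open>v\<close> lies on the relative boundary, the outer
  normal of a supporting hyperplane gives two admissible parameter paths with incompatible
  epi-limits. This proves (a) \<open>\<longleftrightarrow>\<close> (c), and (b) \<open>\<longleftrightarrow>\<close> (d) follows since the conjugate of a
  polyhedral function is polyhedral. Finally \<open>\<partial>g\<^sup>*(\<lambda>)\<close> is locally \<open>z\<close> plus the normal
  cone of \<open>\<partial>g z\<close> at \<open>\<lambda>\<close>, and \<open>0\<close> lies in the relative interior of that cone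
  exactly when \<open>\<lambda>\<close> lies in the relative interior of \<open>\<partial>g z\<close>: this is (c) \<open>\<longleftrightarrow>\<close> (d).\<close>

section \<open>Polyhedral functions as piecewise-affine functions\<close>

definition max_affine :: "('a::real_inner \<times> real) set \<Rightarrow> 'a \<Rightarrow> real" where
  "max_affine A x = Max ((\<lambda>(a, b). inner a x + b) ` A)"

definition ineq_set :: "('a::real_inner \<times> real) set \<Rightarrow> 'a set" where
  "ineq_set B = {x. \<forall>(c, d)\<in>B. inner c x \<le> d}"

definition piecewise_affine :: "('a::real_inner \<times> real) set \<Rightarrow> ('a \<times> real) set \<Rightarrow> 'a \<Rightarrow> ereal" where
  "piecewise_affine A B x = (if x \<in> ineq_set B then ereal (max_affine A x) else \<infinity>)"

lemma max_affine_ge: "finite A \<Longrightarrow> (a, b) \<in> A \<Longrightarrow> inner a x + b \<le> max_affine A x"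
  unfolding max_affine_def by (rule Max_ge) force+

lemma max_affine_le_iff:
  "finite A \<Longrightarrow> A \<noteq> {} \<Longrightarrow> max_affine A x \<le> r \<longleftrightarrow> (\<forall>(a, b)\<in>A. inner a x + b \<le> r)"
  unfolding max_affine_def by (subst Max_le_iff) auto

lemma max_affine_attained:
  assumes "finite A" "A \<noteq> {}"
  obtains a b where "(a, b) \<in> A" "max_affine A x = inner a x + b"
proof -
  have "Max ((\<lambda>(a, b). inner a x + b) ` A) \<in> (\<lambda>(a, b). inner a x + b) ` A"
    using assms by (intro Max_in) auto
  then show ?thesis using that unfolding max_affine_def by auto
qed

lemma piecewise_affine_eqI:
  fixes g :: "'a::real_inner \<Rightarrow> ereal"
  assumes "finite A" "A \<noteq> {}"
    and epi: "\<And>x r. g x \<le> ereal r \<longleftrightarrow> x \<in> ineq_set B \<and> (\<forall>(a, b)\<in>A. inner a x + b \<le> r)"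
  shows "g = piecewise_affine A B"
proof
  fix x
  show "g x = piecewise_affine A B x"
  proof (cases "x \<in> ineq_set B")
    case True
    have "g x \<le> ereal (max_affine A x)"
      using epi True max_affine_ge[OF assms(1)] by auto
    moreover have "ereal (max_affine A x) \<le> g x"
      by (rule ereal_le_real) (use epi True max_affine_le_iff[OF assms(1,2)] in auto)
    ultimately show ?thesis using True unfolding piecewise_affine_def by simp
  next
    case False
    then have "ereal r \<le> g x" for r using epi[of x r] by simp
    then have "g x = \<infinity>" by (rule ereal_top)
    then show ?thesis using False unfolding piecewise_affine_def by simp
  qed
qed

lemma polyhedron_epi_ineqs:
  fixes g :: "'a::euclidean_space \<Rightarrow> ereal"
  assumes "polyhedron (epi g)"
  obtains H :: "('a \<times> real \<times> real) set" where "finite H"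
    "\<And>x r. g x \<le> ereal r \<longleftrightarrow> (\<forall>(p, \<alpha>, \<beta>)\<in>H. inner p x + \<alpha> * r \<le> \<beta>)"
proof -
  obtain F where F: "finite F" "epi g = \<Inter>F" "\<forall>h\<in>F. \<exists>a b. a \<noteq> 0 \<and> h = {x. inner a x \<le> b}"
    using assms unfolding polyhedron_def by blast
  then have "\<forall>h\<in>F. \<exists>ab. h = {x. inner (fst ab) x \<le> snd ab}" by force
  then have "\<exists>n. \<forall>h\<in>F. h = {x. inner (fst (n h)) x \<le> snd (n h)}" by (rule bchoice)
  then obtain n where n: "\<forall>h\<in>F. h = {x. inner (fst (n h)) x \<le> snd (n h)}" by blast
  define H where "H = (\<lambda>h. (fst (fst (n h)), snd (fst (n h)), snd (n h))) ` F"
  have mem: "(x, r) \<in> h \<longleftrightarrow> inner (fst (fst (n h))) x + snd (fst (n h)) * r \<le> snd (n h)"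
    if "h \<in> F" for h x r
  proof -
    have "(x, r) \<in> h \<longleftrightarrow> inner (fst (n h)) (x, r) \<le> snd (n h)" using n that by blast
    then show ?thesis by (cases "fst (n h)") simp
  qed
  have "g x \<le> ereal r \<longleftrightarrow> (\<forall>h\<in>F. (x, r) \<in> h)" for x r
    using F(2) unfolding epi_def by auto
  then have "g x \<le> ereal r \<longleftrightarrow> (\<forall>(p, \<alpha>, \<beta>)\<in>H. inner p x + \<alpha> * r \<le> \<beta>)" for x r
    unfolding H_def using mem by simp
  moreover have "finite H" unfolding H_def using F(1) by simp
  ultimately show ?thesis using that by blast
qed

lemma epi_ineq_coeff_nonpos:
  fixes g :: "'a::real_inner \<Rightarrow> ereal"
  assumes epi: "\<And>x r. g x \<le> ereal r \<longleftrightarrow> (\<forall>(p, \<alpha>, \<beta>)\<in>H. inner p x + \<alpha> * r \<le> \<beta>)"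
    and "g x0 = ereal r0" and "(p, \<alpha>, \<beta>) \<in> H"
  shows "\<alpha> \<le> 0"
proof (rule ccontr)
  assume "\<not> \<alpha> \<le> 0"
  define s where "s = (\<bar>\<beta> - inner p x0 - \<alpha> * r0\<bar> + 1) / \<alpha>"
  have "g x0 \<le> ereal (r0 + s)"
    using assms(2) \<open>\<not> \<alpha> \<le> 0\<close> unfolding s_def by simp
  then have "inner p x0 + \<alpha> * (r0 + s) \<le> \<beta>" using epi assms(3) by fastforce
  moreover have "\<alpha> * s = \<bar>\<beta> - inner p x0 - \<alpha> * r0\<bar> + 1"
    using \<open>\<not> \<alpha> \<le> 0\<close> unfolding s_def by simp
  ultimately show False by (simp add: algebra_simps)
qed

lemma epi_ineqs_split:
  fixes H :: "('a::real_inner \<times> real \<times> real) set"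
  assumes sign: "\<And>p \<alpha> \<beta>. (p, \<alpha>, \<beta>) \<in> H \<Longrightarrow> \<alpha> \<le> 0"
  defines "A \<equiv> (\<lambda>(p, \<alpha>, \<beta>). ((- 1 / \<alpha>) *\<^sub>R p, \<beta> / \<alpha>)) ` {h\<in>H. fst (snd h) < 0}"
    and "B \<equiv> (\<lambda>(p, \<alpha>, \<beta>). (p, \<beta>)) ` {h\<in>H. fst (snd h) = 0}"
  shows "(\<forall>(p, \<alpha>, \<beta>)\<in>H. inner p x + \<alpha> * r \<le> \<beta>) \<longleftrightarrow>
    x \<in> ineq_set B \<and> (\<forall>(a, b)\<in>A. inner a x + b \<le> r)"
proof -
  have scaled: "inner p x + \<alpha> * r \<le> \<beta> \<longleftrightarrow> inner ((- 1 / \<alpha>) *\<^sub>R p) x + \<beta> / \<alpha> \<le> r"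
    if "\<alpha> < 0" for p \<alpha> \<beta> and x :: 'a and r
  proof -
    have "inner ((- 1 / \<alpha>) *\<^sub>R p) x + \<beta> / \<alpha> = (\<beta> - inner p x) / \<alpha>"
      using that by (simp add: field_simps)
    then show ?thesis using that by (simp add: neg_divide_le_eq algebra_simps)
  qed
  show ?thesis
  proof
    assume H: "\<forall>(p, \<alpha>, \<beta>)\<in>H. inner p x + \<alpha> * r \<le> \<beta>"
    have "x \<in> ineq_set B" unfolding B_def ineq_set_def using H by auto
    moreover have "\<forall>(a, b)\<in>A. inner a x + b \<le> r" unfolding A_def using H scaled by auto
    ultimately show "x \<in> ineq_set B \<and> (\<forall>(a, b)\<in>A. inner a x + b \<le> r)" by blast
  next
    assume AB: "x \<in> ineq_set B \<and> (\<forall>(a, b)\<in>A. inner a x + b \<le> r)"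
    show "\<forall>(p, \<alpha>, \<beta>)\<in>H. inner p x + \<alpha> * r \<le> \<beta>"
    proof (clarify)
      fix p \<alpha> \<beta> assume h: "(p, \<alpha>, \<beta>) \<in> H"
      show "inner p x + \<alpha> * r \<le> \<beta>"
      proof (cases "\<alpha> < 0")
        case True
        then have "((- 1 / \<alpha>) *\<^sub>R p, \<beta> / \<alpha>) \<in> A" unfolding A_def using h by force
        then show ?thesis using AB scaled[OF True] by auto
      next
        case False
        then have "\<alpha> = 0" using sign[OF h] by linarith
        then have "(p, \<beta>) \<in> B" unfolding B_def using h by force
        then show ?thesis using AB \<open>\<alpha> = 0\<close> unfolding ineq_set_def by auto
      qed
    qed
  qed
qed

lemma polyhedral_fun_piecewise_affine:
  fixes g :: "'a::euclidean_space \<Rightarrow> ereal"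
  assumes "polyhedral_fun g"
  obtains A B where "finite A" "A \<noteq> {}" "finite B" "ineq_set B \<noteq> {}" "g = piecewise_affine A B"
proof -
  obtain H where H: "finite H"
      and epi: "\<And>x r. g x \<le> ereal r \<longleftrightarrow> (\<forall>(p, \<alpha>, \<beta>)\<in>H. inner p x + \<alpha> * r \<le> \<beta>)"
    using assms polyhedron_epi_ineqs unfolding polyhedral_fun_def by blast
  obtain x0 r0 where r0: "g x0 = ereal r0"
    using assms unfolding polyhedral_fun_def proper_fun_def by (metis ereal_cases)
  define A where "A = (\<lambda>(p, \<alpha>, \<beta>). ((- 1 / \<alpha>) *\<^sub>R p, \<beta> / \<alpha>)) ` {h\<in>H. fst (snd h) < 0}"
  define B where "B = (\<lambda>(p, \<alpha>, \<beta>). (p, \<beta>)) ` {h\<in>H. fst (snd h) = 0}"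
  have fin: "finite A" "finite B" unfolding A_def B_def using H by auto
  have "(\<forall>(p, \<alpha>, \<beta>)\<in>H. inner p x + \<alpha> * r \<le> \<beta>) \<longleftrightarrow>
      x \<in> ineq_set B \<and> (\<forall>(a, b)\<in>A. inner a x + b \<le> r)" for x r
    unfolding A_def B_def by (rule epi_ineqs_split) (rule epi_ineq_coeff_nonpos[OF epi r0])
  then have epi': "g x \<le> ereal r \<longleftrightarrow> x \<in> ineq_set B \<and> (\<forall>(a, b)\<in>A. inner a x + b \<le> r)" for x r
    using epi by simp
  have "A \<noteq> {}"
  proof
    assume "A = {}"
    then have "g x0 \<le> ereal (r0 - 1)" using epi'[of x0 "r0 - 1"] epi'[of x0 r0] r0 by simp
    then show False using r0 by simp
  qed
  moreover have "x0 \<in> ineq_set B" using epi'[of x0 r0] r0 by simp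
  ultimately show ?thesis
    using that fin piecewise_affine_eqI[OF fin(1) \<open>A \<noteq> {}\<close> epi'] by blast
qed

section \<open>Local structure of polyhedral functions\<close>

definition polar_cone :: "'a::real_inner set \<Rightarrow> 'a set" where
  "polar_cone C = {u. \<forall>c\<in>C. inner c u \<le> 0}"

definition max_inner :: "'a::real_inner set \<Rightarrow> 'a \<Rightarrow> real" where
  "max_inner A u = Max ((\<lambda>a. inner a u) ` A)"

text \<open>The subdifferential at \<open>0\<close> of \<open>max_inner A\<close> restricted to \<open>polar_cone C\<close>;
  by duality it is \<open>conv A + cone C\<close>.\<close>
definition sublinear_subdiff :: "'a::real_inner set \<Rightarrow> 'a set \<Rightarrow> 'a set" where
  "sublinear_subdiff A C = {v. \<forall>u\<in>polar_cone C. inner v u \<le> max_inner A u}"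

lemma polar_cone_scale: "u \<in> polar_cone C \<Longrightarrow> 0 \<le> s \<Longrightarrow> s *\<^sub>R u \<in> polar_cone C"
  unfolding polar_cone_def by (auto simp: mult_nonneg_nonpos)

lemma polar_cone_add: "u \<in> polar_cone C \<Longrightarrow> y \<in> polar_cone C \<Longrightarrow> u + y \<in> polar_cone C"
  unfolding polar_cone_def by (auto simp: inner_add_right add_nonpos_nonpos)

lemma zero_in_polar_cone: "0 \<in> polar_cone C"
  unfolding polar_cone_def by auto

lemma max_inner_ge: "finite A \<Longrightarrow> a \<in> A \<Longrightarrow> inner a u \<le> max_inner A u"
  unfolding max_inner_def by (rule Max_ge) auto

lemma max_inner_attained:
  assumes "finite A" "A \<noteq> {}"
  obtains a where "a \<in> A" "max_inner A u = inner a u"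
proof -
  have "Max ((\<lambda>a. inner a u) ` A) \<in> (\<lambda>a. inner a u) ` A" using assms by (intro Max_in) auto
  then show ?thesis using that unfolding max_inner_def by auto
qed

lemma max_inner_le_iff:
  "finite A \<Longrightarrow> A \<noteq> {} \<Longrightarrow> max_inner A u \<le> r \<longleftrightarrow> (\<forall>a\<in>A. inner a u \<le> r)"
  unfolding max_inner_def by (subst Max_le_iff) auto

lemma max_inner_scale:
  assumes "finite A" "A \<noteq> {}" "0 \<le> s"
  shows "max_inner A (s *\<^sub>R u) = s * max_inner A u"
proof (rule antisym)
  show "max_inner A (s *\<^sub>R u) \<le> s * max_inner A u"
    using assms max_inner_ge[OF assms(1)] by (subst max_inner_le_iff) (auto intro: mult_left_mono)
  obtain a where "a \<in> A" "max_inner A u = inner a u" using max_inner_attained assms by blast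
  then show "s * max_inner A u \<le> max_inner A (s *\<^sub>R u)"
    using max_inner_ge[OF assms(1), of a "s *\<^sub>R u"] by simp
qed

lemma max_inner_zero: "finite A \<Longrightarrow> A \<noteq> {} \<Longrightarrow> max_inner A 0 = 0"
  using max_inner_scale[of A 0 0] by simp

lemma max_inner_add:
  assumes "finite A" "A \<noteq> {}"
  shows "max_inner A (u + y) \<le> max_inner A u + max_inner A y"
proof -
  obtain a where "a \<in> A" "max_inner A (u + y) = inner a (u + y)"
    using max_inner_attained assms by blast
  then show ?thesis
    using max_inner_ge[OF assms(1), of a u] max_inner_ge[OF assms(1), of a y]
    by (simp add: inner_add_right)
qed

lemma subset_sublinear_subdiff: "finite A \<Longrightarrow> A \<subseteq> sublinear_subdiff A C"
  unfolding sublinear_subdiff_def using max_inner_ge by blast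

lemma sublinear_subdiff_add_polar:
  assumes "v \<in> sublinear_subdiff A C" "c \<in> C" "0 \<le> s"
  shows "v + s *\<^sub>R c \<in> sublinear_subdiff A C"
proof -
  have "s * inner c u \<le> 0" if "u \<in> polar_cone C" for u
    using that assms(2,3) unfolding polar_cone_def by (simp add: mult_nonneg_nonpos)
  then show ?thesis using assms(1) unfolding sublinear_subdiff_def
    by (auto simp: inner_add_left intro: add_le_imp_le_right order_trans[rotated])
qed

lemma convex_sublinear_subdiff: "convex (sublinear_subdiff A C)"
proof -
  have "sublinear_subdiff A C = (\<Inter>u\<in>polar_cone C. {v. inner u v \<le> max_inner A u})"
    unfolding sublinear_subdiff_def by (auto simp: inner_commute)
  then show ?thesis by (simp add: convex_INT convex_halfspace_le)
qed

definition local_max_form ::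
    "('a::real_inner \<Rightarrow> ereal) \<Rightarrow> 'a \<Rightarrow> 'a set \<Rightarrow> 'a set \<Rightarrow> real \<Rightarrow> real \<Rightarrow> bool" where
  "local_max_form f x A C r m \<longleftrightarrow> finite A \<and> A \<noteq> {} \<and> 0 < r \<and>
     (\<forall>u. norm u < r \<longrightarrow>
        f (x + u) = (if u \<in> polar_cone C then ereal (m + max_inner A u) else \<infinity>)) \<and>
     (\<forall>u. (if u \<in> polar_cone C then ereal (m + max_inner A u) else \<infinity>) \<le> f (x + u))"

lemma strict_ineqs_near:
  fixes x :: "'a::real_inner"
  assumes "finite P"
  obtains r where "0 < r" "\<And>u c e. norm u < r \<Longrightarrow> (c, e) \<in> P \<Longrightarrow> inner c x < e \<Longrightarrow> inner c (x + u) < e"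
proof -
  have "eventually (\<lambda>u. inner c x < e \<longrightarrow> inner c (x + u) < e) (nhds 0)" for c e
  proof (cases "inner c x < e")
    case True
    have "((\<lambda>u. inner c (x + u)) \<longlongrightarrow> inner c (x + 0)) (nhds 0)"
      by (intro tendsto_intros filterlim_ident)
    then show ?thesis using True by (auto elim: eventually_mono dest: order_tendstoD(2))
  qed simp
  then have "eventually (\<lambda>u. \<forall>(c, e)\<in>P. inner c x < e \<longrightarrow> inner c (x + u) < e) (nhds 0)"
    using assms by (auto intro: eventually_ball_finite)
  then show ?thesis using that unfolding eventually_nhds_metric by (fastforce simp: dist_norm)
qed

lemma ineq_set_near:
  fixes x :: "'a::real_inner"
  assumes "finite B" "x \<in> ineq_set B"
  defines "C \<equiv> {c. (c, inner c x) \<in> B}"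
  obtains r where "0 < r"
    "\<And>u. norm u < r \<Longrightarrow> x + u \<in> ineq_set B \<longleftrightarrow> u \<in> polar_cone C"
    "\<And>u. x + u \<in> ineq_set B \<Longrightarrow> u \<in> polar_cone C"
proof -
  obtain r where r: "0 < r"
    "\<And>u c d. norm u < r \<Longrightarrow> (c, d) \<in> B \<Longrightarrow> inner c x < d \<Longrightarrow> inner c (x + u) < d"
    using strict_ineqs_near[OF assms(1)] by blast
  have global: "u \<in> polar_cone C" if "x + u \<in> ineq_set B" for u
    using that unfolding ineq_set_def polar_cone_def C_def by (fastforce simp: inner_add_right)
  have "x + u \<in> ineq_set B" if "norm u < r" "u \<in> polar_cone C" for u
    unfolding ineq_set_def
  proof (clarify)
    fix c d assume cd: "(c, d) \<in> B"
    then have "inner c x \<le> d" using assms(2) unfolding ineq_set_def by auto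
    moreover have "inner c (x + u) \<le> d" if "inner c x = d"
      using that cd \<open>u \<in> polar_cone C\<close> unfolding polar_cone_def C_def
        by (auto simp: inner_add_right)
    ultimately show "inner c (x + u) \<le> d" using r(2)[OF \<open>norm u < r\<close> cd] by fastforce
  qed
  then show ?thesis using that r(1) global by blast
qed

lemma max_affine_near:
  fixes x :: "'a::real_inner"
  assumes A: "finite A" "A \<noteq> {}"
  defines "A0 \<equiv> {a. (a, max_affine A x - inner a x) \<in> A}"
  obtains r where "0 < r" "finite A0" "A0 \<noteq> {}"
    "\<And>u. norm u < r \<Longrightarrow> max_affine A (x + u) = max_affine A x + max_inner A0 u"
    "\<And>u. max_affine A x + max_inner A0 u \<le> max_affine A (x + u)"
proof -
  define M where "M = max_affine A x"
  obtain as bs where asb: "(as, bs) \<in> A" "M = inner as x + bs"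
    using max_affine_attained[OF A] M_def by metis
  have fin: "finite A0"
    by (rule finite_subset[of _ "fst ` A"]) (use A in \<open>force simp: A0_def\<close>)+
  have as: "as \<in> A0" using asb unfolding A0_def M_def by simp
  obtain r where r: "0 < r" "\<And>u c e. norm u < r \<Longrightarrow> (c, e) \<in> (\<lambda>(a, b). (a - as, bs - b)) ` A \<Longrightarrow>
      inner c x < e \<Longrightarrow> inner c (x + u) < e"
    using strict_ineqs_near[of "(\<lambda>(a, b). (a - as, bs - b)) ` A" x] A(1) by blast
  have le: "max_affine A (x + u) \<le> M + max_inner A0 u" if "norm u < r" for u
  proof (subst max_affine_le_iff[OF A], clarify)
    fix a b assume ab: "(a, b) \<in> A"
    show "inner a (x + u) + b \<le> M + max_inner A0 u"
    proof (cases "inner a x + b = M")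
      case True
      then have "b = M - inner a x" by simp
      then have "a \<in> A0" using ab unfolding A0_def M_def by simp
      then show ?thesis using max_inner_ge[OF fin, of a u] True by (simp add: inner_add_right)
    next
      case False
      then have "inner a x + b < M" using max_affine_ge[OF A(1) ab, of x] M_def by linarith
      then have "inner (a - as) (x + u) < bs - b"
        using r(2)[OF that, of "a - as" "bs - b"] ab asb by (force simp: inner_diff_left)
      then have "inner a (x + u) + b < M + inner as u" using asb by (simp add: algebra_simps)
      then show ?thesis using max_inner_ge[OF fin as, of u] by linarith
    qed
  qed
  have ge: "M + max_inner A0 u \<le> max_affine A (x + u)" for u
  proof -
    obtain a where "a \<in> A0" "max_inner A0 u = inner a u"
      using max_inner_attained[OF fin] as by blast
    then show ?thesis
      using max_affine_ge[OF A(1), of a "M - inner a x" "x + u"] unfolding A0_def M_def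
      by (simp add: inner_add_right)
  qed
  show ?thesis
  proof (rule that[OF r(1) fin])
    show "A0 \<noteq> {}" using as by blast
    show "max_affine A (x + u) = max_affine A x + max_inner A0 u" if "norm u < r" for u
      using le[OF that] ge[of u] M_def by simp
    show "max_affine A x + max_inner A0 u \<le> max_affine A (x + u)" for u
      using ge M_def by simp
  qed
qed

lemma piecewise_affine_local_max_form:
  fixes x :: "'a::real_inner"
  assumes "finite A" "A \<noteq> {}" "finite B" "x \<in> ineq_set B"
  obtains A0 C r where "local_max_form (piecewise_affine A B) x A0 C r (max_affine A x)"
proof -
  define C where "C = {c. (c, inner c x) \<in> B}"
  define A0 where "A0 = {a. (a, max_affine A x - inner a x) \<in> A}"
  obtain r1 where r1: "0 < r1"
    "\<And>u. norm u < r1 \<Longrightarrow> x + u \<in> ineq_set B \<longleftrightarrow> u \<in> polar_cone C"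
    "\<And>u. x + u \<in> ineq_set B \<Longrightarrow> u \<in> polar_cone C"
    using ineq_set_near[OF assms(3,4)] C_def by blast
  obtain r2 where r2: "0 < r2" "finite A0" "A0 \<noteq> {}"
    "\<And>u. norm u < r2 \<Longrightarrow> max_affine A (x + u) = max_affine A x + max_inner A0 u"
    "\<And>u. max_affine A x + max_inner A0 u \<le> max_affine A (x + u)"
    using max_affine_near[OF assms(1,2)] A0_def by blast
  have "local_max_form (piecewise_affine A B) x A0 C (min r1 r2) (max_affine A x)"
    unfolding local_max_form_def piecewise_affine_def
    using r1 r2 by (auto simp: not_le)
  then show ?thesis by (rule that)
qed

lemma subdiff_finite: "v \<in> subdiff f x \<Longrightarrow> \<exists>m. f x = ereal m"
  unfolding subdiff_def by (cases "f x") auto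

lemma subdiff_ineq: "v \<in> subdiff f x \<Longrightarrow> f x + ereal (inner v (y - x)) \<le> f y"
  unfolding subdiff_def by auto

lemma convex_subdiff: "convex (subdiff f x)"
  unfolding convex_def
proof (intro ballI allI impI)
  fix v1 v2 and s t :: real
  assume v: "v1 \<in> subdiff f x" "v2 \<in> subdiff f x" and st: "0 \<le> s" "0 \<le> t" "s + t = 1"
  obtain m where m: "f x = ereal m" using subdiff_finite[OF v(1)] by blast
  show "s *\<^sub>R v1 + t *\<^sub>R v2 \<in> subdiff f x" unfolding subdiff_def
  proof (intro CollectI conjI allI)
    show "\<bar>f x\<bar> \<noteq> \<infinity>" using m by simp
    fix y
    show "f x + ereal (inner (s *\<^sub>R v1 + t *\<^sub>R v2) (y - x)) \<le> f y"
    proof (cases "f y")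
      case (real e)
      have "m + inner v1 (y - x) \<le> e" "m + inner v2 (y - x) \<le> e"
        using subdiff_ineq[OF v(1), of y] subdiff_ineq[OF v(2), of y] m real by simp_all
      then have "s * (m + inner v1 (y - x)) + t * (m + inner v2 (y - x)) \<le> s * e + t * e"
        using st by (intro add_mono mult_left_mono) auto
      moreover have "s * m + t * m = m" "s * e + t * e = e"
        using st(3) by (metis distrib_right mult_1)+
      ultimately show ?thesis using m real by (simp add: algebra_simps)
    next
      case MInf
      then show ?thesis using subdiff_ineq[OF v(1), of y] m by simp
    qed simp
  qed
qed

lemma small_step_in_ball:
  fixes u z :: "'a::real_normed_vector"
  assumes "norm u < r"
  obtains s where "0 < s" "norm (u + s *\<^sub>R z) < r"
proof -
  define s where "s = (r - norm u) / (norm z + 1)"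
  have s: "0 < s" unfolding s_def using assms by (simp add: add_nonneg_pos)
  have "norm (u + s *\<^sub>R z) \<le> norm u + s * norm z" using norm_triangle_ineq[of u "s *\<^sub>R z"] s by simp
  also have "\<dots> < norm u + s * (norm z + 1)" using s by simp
  also have "\<dots> = r"
  proof -
    have "norm z + 1 \<noteq> 0" using norm_ge_zero[of z] by linarith
    then show ?thesis unfolding s_def by simp
  qed
  finally show ?thesis using that s by blast
qed

lemma local_subgradient_max_inner:
  assumes fin: "finite A" "A \<noteq> {}" and u: "u \<in> polar_cone C" "norm u < r"
    and sub: "\<And>y. y \<in> polar_cone C \<Longrightarrow> norm y < r \<Longrightarrow>
      max_inner A u + inner v (y - u) \<le> max_inner A y"
  shows "v \<in> sublinear_subdiff A C" "inner v u = max_inner A u"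
proof -
  show vF: "v \<in> sublinear_subdiff A C" unfolding sublinear_subdiff_def
  proof (intro CollectI ballI)
    fix z assume z: "z \<in> polar_cone C"
    obtain s where s: "0 < s" "norm (u + s *\<^sub>R z) < r" using small_step_in_ball[OF u(2)] by blast
    have "max_inner A u + s * inner v z \<le> max_inner A (u + s *\<^sub>R z)"
      using sub[OF polar_cone_add[OF u(1) polar_cone_scale[OF z]] s(2)] s by simp
    also have "\<dots> \<le> max_inner A u + s * max_inner A z"
      using max_inner_add[OF fin, of u "s *\<^sub>R z"] max_inner_scale[OF fin, of s z] s by simp
    finally show "inner v z \<le> max_inner A z" using s by simp
  qed
  have "norm ((1/2) *\<^sub>R u) = norm u / 2" by simp
  then have "norm ((1/2) *\<^sub>R u) < r" using u(2) norm_ge_zero[of u] by linarith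
  moreover have "(1/2) *\<^sub>R u \<in> polar_cone C" by (rule polar_cone_scale[OF u(1)]) simp
  ultimately have "max_inner A u + inner v ((1/2) *\<^sub>R u - u) \<le> max_inner A ((1/2) *\<^sub>R u)"
    using sub by blast
  moreover have "inner v ((1/2) *\<^sub>R u - u) = - inner v u / 2" by (simp add: inner_diff_right)
  ultimately have "max_inner A u - inner v u / 2 \<le> max_inner A ((1/2) *\<^sub>R u)" by simp
  then have "max_inner A u \<le> inner v u" using max_inner_scale[OF fin, of "1/2" u] by simp
  moreover have "inner v u \<le> max_inner A u" using vF u(1) unfolding sublinear_subdiff_def by blast
  ultimately show "inner v u = max_inner A u" by simp
qed

lemma local_max_form_subdiffD:
  assumes LD: "local_max_form f x A C r m" and u: "norm u < r" and v: "v \<in> subdiff f (x + u)"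
  shows "u \<in> polar_cone C" "v \<in> sublinear_subdiff A C" "inner v u = max_inner A u"
proof -
  have fin: "finite A" "A \<noteq> {}"
    and loc: "\<And>u. norm u < r \<Longrightarrow>
      f (x + u) = (if u \<in> polar_cone C then ereal (m + max_inner A u) else \<infinity>)"
    using LD unfolding local_max_form_def by auto
  show uK: "u \<in> polar_cone C"
    using subdiff_finite[OF v] loc[OF u] by (auto split: if_splits)
  have "max_inner A u + inner v (y - u) \<le> max_inner A y"
    if "y \<in> polar_cone C" "norm y < r" for y
    using subdiff_ineq[OF v, of "x + y"] loc[OF u] loc[OF that(2)] uK that(1) by simp
  then show "v \<in> sublinear_subdiff A C" "inner v u = max_inner A u"
    using local_subgradient_max_inner[OF fin uK u] by blast+
qed

lemma local_max_form_subdiffI: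
  assumes LD: "local_max_form f x A C r m" and u: "norm u < r" "u \<in> polar_cone C"
    and v: "v \<in> sublinear_subdiff A C" "inner v u = max_inner A u"
  shows "v \<in> subdiff f (x + u)"
proof -
  have fu: "f (x + u) = ereal (m + max_inner A u)" using LD u unfolding local_max_form_def by simp
  have glob: "(if y \<in> polar_cone C then ereal (m + max_inner A y) else \<infinity>) \<le> f (x + y)" for y
    using LD unfolding local_max_form_def by blast
  have ineq: "f (x + u) + ereal (inner v (x + y - (x + u))) \<le> f (x + y)" for y
  proof (cases "y \<in> polar_cone C")
    case True
    have "inner v y \<le> max_inner A y" using v(1) True unfolding sublinear_subdiff_def by blast
    then have "f (x + u) + ereal (inner v (x + y - (x + u))) \<le> ereal (m + max_inner A y)"
      using fu v(2) by (simp add: inner_diff_right)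
    also have "\<dots> \<le> f (x + y)" using glob[of y] True by simp
    finally show ?thesis .
  next
    case False
    then show ?thesis using glob[of y] by simp
  qed
  show ?thesis unfolding subdiff_def
  proof (intro CollectI conjI allI)
    show "\<bar>f (x + u)\<bar> \<noteq> \<infinity>" using fu by simp
    show "f (x + u) + ereal (inner v (y - (x + u))) \<le> f y" for y
      using ineq[of "y - x"] by simp
  qed
qed

definition normal_cone :: "'a::real_inner set \<Rightarrow> 'a \<Rightarrow> 'a set" where
  "normal_cone S v = {u. \<forall>y\<in>S. inner y u \<le> inner v u}"

lemma zero_in_normal_cone: "0 \<in> normal_cone S v"
  unfolding normal_cone_def by simp

lemma normal_cone_scale: "u \<in> normal_cone S v \<Longrightarrow> 0 \<le> s \<Longrightarrow> s *\<^sub>R u \<in> normal_cone S v"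
  unfolding normal_cone_def by (auto intro: mult_left_mono)

lemma convex_normal_cone: "convex (normal_cone S v)"
proof -
  have "normal_cone S v = (\<Inter>y\<in>S. {u. inner (y - v) u \<le> 0})"
    unfolding normal_cone_def by (auto simp: inner_diff_left)
  then show ?thesis by (simp add: convex_INT convex_halfspace_le)
qed

lemma normal_cone_sublinear_subdiff:
  assumes fin: "finite A" "A \<noteq> {}" and v: "v \<in> sublinear_subdiff A C"
  shows "u \<in> normal_cone (sublinear_subdiff A C) v \<longleftrightarrow>
    u \<in> polar_cone C \<and> inner v u = max_inner A u"
proof
  assume "u \<in> polar_cone C \<and> inner v u = max_inner A u"
  then show "u \<in> normal_cone (sublinear_subdiff A C) v"
    unfolding normal_cone_def sublinear_subdiff_def by auto
next
  assume N: "u \<in> normal_cone (sublinear_subdiff A C) v"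
  have uK: "u \<in> polar_cone C"
  proof (rule ccontr)
    assume "u \<notin> polar_cone C"
    then obtain c where c: "c \<in> C" "inner c u > 0" unfolding polar_cone_def by auto
    have "v + 1 *\<^sub>R c \<in> sublinear_subdiff A C" by (rule sublinear_subdiff_add_polar[OF v c(1)]) simp
    then have "inner (v + 1 *\<^sub>R c) u \<le> inner v u" using N unfolding normal_cone_def by blast
    then show False using c by (simp add: inner_add_left)
  qed
  obtain a where "a \<in> A" "max_inner A u = inner a u" using max_inner_attained fin by blast
  moreover have "a \<in> sublinear_subdiff A C"
    using subset_sublinear_subdiff[OF fin(1), of C] \<open>a \<in> A\<close> by blast
  ultimately have "max_inner A u \<le> inner v u" using N unfolding normal_cone_def by simp
  moreover have "inner v u \<le> max_inner A u" using v uK unfolding sublinear_subdiff_def by blast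
  ultimately show "u \<in> polar_cone C \<and> inner v u = max_inner A u" using uK by simp
qed

text \<open>Near \<open>x\<close>, the subgradients of \<open>f\<close> and its values are those of
  \<open>f x\<close> plus the support function of \<open>F\<close>.\<close>
definition support_model :: "('a::real_inner \<Rightarrow> ereal) \<Rightarrow> 'a \<Rightarrow> 'a set \<Rightarrow> real \<Rightarrow> bool" where
  "support_model f x F r \<longleftrightarrow> 0 < r \<and> convex F \<and>
     (\<forall>u v. norm u < r \<longrightarrow> v \<in> subdiff f (x + u) \<longleftrightarrow> v \<in> F \<and> u \<in> normal_cone F v) \<and>
     (\<forall>u v. norm u < r \<longrightarrow> v \<in> F \<longrightarrow> u \<in> normal_cone F v \<longrightarrow>
        f (x + u) = f x + ereal (inner v u))"

lemma support_model_subdiff_iff: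
  "support_model f x F r \<Longrightarrow> norm u < r \<Longrightarrow>
    v \<in> subdiff f (x + u) \<longleftrightarrow> v \<in> F \<and> u \<in> normal_cone F v"
  unfolding support_model_def by blast

lemma support_model_value:
  "support_model f x F r \<Longrightarrow> norm u < r \<Longrightarrow> v \<in> F \<Longrightarrow> u \<in> normal_cone F v \<Longrightarrow>
    f (x + u) = f x + ereal (inner v u)"
  unfolding support_model_def by blast

lemma support_model_subdiff: "support_model f x F r \<Longrightarrow> subdiff f x = F"
  using support_model_subdiff_iff[of f x F r 0] zero_in_normal_cone
  unfolding support_model_def by auto

lemma local_max_form_support_model:
  fixes f :: "'a::real_inner \<Rightarrow> ereal"
  assumes LD: "local_max_form f x A C r m"
  shows "support_model f x (sublinear_subdiff A C) r"
proof -
  have fin: "finite A" "A \<noteq> {}" "0 < r" using LD unfolding local_max_form_def by auto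
  have "f (x + 0) = ereal (m + max_inner A 0)"
    using LD zero_in_polar_cone unfolding local_max_form_def by (metis norm_zero)
  then have fx: "f x = ereal m" using max_inner_zero[OF fin(1,2)] by simp
  have N: "u \<in> normal_cone (sublinear_subdiff A C) v \<longleftrightarrow>
      u \<in> polar_cone C \<and> inner v u = max_inner A u" if "v \<in> sublinear_subdiff A C" for u v
    using normal_cone_sublinear_subdiff[OF fin(1,2) that] .
  show ?thesis unfolding support_model_def
  proof (intro conjI allI impI fin(3) convex_sublinear_subdiff)
    fix u v :: 'a assume u: "norm u < r"
    show "v \<in> subdiff f (x + u) \<longleftrightarrow>
        v \<in> sublinear_subdiff A C \<and> u \<in> normal_cone (sublinear_subdiff A C) v"
      using local_max_form_subdiffD[OF LD u] local_max_form_subdiffI[OF LD u] N by blast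
    assume "v \<in> sublinear_subdiff A C" "u \<in> normal_cone (sublinear_subdiff A C) v"
    then show "f (x + u) = f x + ereal (inner v u)"
      using LD u N fx unfolding local_max_form_def by auto
  qed
qed

lemma polyhedral_fun_support_model:
  assumes "polyhedral_fun f" "v \<in> subdiff f x"
  obtains F r where "support_model f x F r"
proof -
  obtain A B where AB: "finite A" "A \<noteq> {}" "finite B" "f = piecewise_affine A B"
    using polyhedral_fun_piecewise_affine[OF assms(1)] by metis
  have "x \<in> ineq_set B"
    using subdiff_finite[OF assms(2)] AB(4) unfolding piecewise_affine_def
      by (auto split: if_splits)
  then obtain A0 C r where "local_max_form f x A0 C r (max_affine A x)"
    using piecewise_affine_local_max_form[OF AB(1-3)] AB(4) by metis
  then show ?thesis using that local_max_form_support_model by blast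
qed

section \<open>Normal cones at relative interior points\<close>

lemma rel_interior_normal_cone:
  fixes S :: "'a::euclidean_space set"
  assumes "convex S" "v \<in> rel_interior S" "u \<in> normal_cone S v" "y \<in> S"
  shows "inner y u = inner v u"
proof -
  obtain e where e: "1 < e" "(1 - e) *\<^sub>R y + e *\<^sub>R v \<in> S"
    using convex_rel_interior_iff[OF assms(1)] assms(2,4) by blast
  have "inner ((1 - e) *\<^sub>R y + e *\<^sub>R v) u \<le> inner v u"
    using assms(3) e(2) unfolding normal_cone_def by blast
  then have "(e - 1) * (inner v u - inner y u) \<le> 0" by (simp add: algebra_simps)
  then have "inner v u \<le> inner y u" using e(1) by (simp add: mult_le_0_iff)
  moreover have "inner y u \<le> inner v u" using assms(3,4) unfolding normal_cone_def by blast
  ultimately show ?thesis by simp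
qed

lemma normal_cone_rel_interior_subset:
  fixes S :: "'a::euclidean_space set"
  assumes "convex S" "v \<in> rel_interior S" "w \<in> S"
  shows "normal_cone S v \<subseteq> normal_cone S w"
proof
  fix u assume u: "u \<in> normal_cone S v"
  have "inner y u = inner w u" if "y \<in> S" for y
    using rel_interior_normal_cone[OF assms(1,2) u] that assms(3) by simp
  then show "u \<in> normal_cone S w" unfolding normal_cone_def by simp
qed

lemma normal_cone_rel_interior_add:
  fixes S :: "'a::euclidean_space set"
  assumes "convex S" "v \<in> rel_interior S" "u \<in> normal_cone S v" "w \<in> normal_cone S v"
  shows "u + t *\<^sub>R w \<in> normal_cone S v"
  unfolding normal_cone_def
proof (intro CollectI ballI)
  fix y assume "y \<in> S"
  then have "inner y u = inner v u" "inner y w = inner v w"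
    using rel_interior_normal_cone[OF assms(1,2)] assms(3,4) by blast+
  then show "inner y (u + t *\<^sub>R w) \<le> inner v (u + t *\<^sub>R w)" by (simp add: inner_add_right)
qed

lemma rel_interior_nbhd:
  fixes S :: "'a::euclidean_space set"
  assumes "v \<in> rel_interior S"
  obtains e where "0 < e" "\<And>y. y \<in> S \<Longrightarrow> dist y v < e \<Longrightarrow> y \<in> rel_interior S"
proof -
  have "\<forall>x\<in>rel_interior S. \<exists>e>0. \<forall>y\<in>affine hull S. dist y x < e \<longrightarrow> y \<in> rel_interior S"
    using openin_rel_interior[of S] unfolding openin_euclidean_subtopology_iff by (rule conjunct2)
  then obtain e where e: "0 < e" "\<forall>y\<in>affine hull S. dist y v < e \<longrightarrow> y \<in> rel_interior S"
    using assms by blast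
  show ?thesis
  proof (rule that[OF e(1)])
    fix y assume "y \<in> S" "dist y v < e"
    then show "y \<in> rel_interior S" using e(2) hull_inc[of y S] by blast
  qed
qed

lemma rel_interior_iff_zero_rel_interior_normal_cone:
  fixes S :: "'a::euclidean_space set"
  assumes S: "convex S" "v \<in> S"
  shows "v \<in> rel_interior S \<longleftrightarrow> 0 \<in> rel_interior (normal_cone S v)"
proof
  assume v: "v \<in> rel_interior S"
  have "u + w \<in> normal_cone S v" if "u \<in> normal_cone S v" "w \<in> normal_cone S v" for u w
    using normal_cone_rel_interior_add[OF S(1) v that, of 1] by simp
  moreover have "c *\<^sub>R u \<in> normal_cone S v" if "u \<in> normal_cone S v" for c u
    using normal_cone_rel_interior_add[OF S(1) v zero_in_normal_cone that, of c] by simp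
  ultimately have "subspace (normal_cone S v)"
    unfolding subspace_def using zero_in_normal_cone by blast
  then show "0 \<in> rel_interior (normal_cone S v)"
    using zero_in_normal_cone rel_interior_affine subspace_imp_affine by metis
next
  assume 0: "0 \<in> rel_interior (normal_cone S v)"
  show "v \<in> rel_interior S"
  proof (rule ccontr)
    assume "v \<notin> rel_interior S"
    then obtain a where a: "\<And>y. y \<in> S \<Longrightarrow> a \<bullet> v \<le> a \<bullet> y"
        "\<And>y. y \<in> rel_interior S \<Longrightarrow> a \<bullet> v < a \<bullet> y"
      using supporting_hyperplane_rel_boundary[OF S] by metis
    obtain y0 where y0: "y0 \<in> rel_interior S" using rel_interior_eq_empty S by blast
    have "- a \<in> normal_cone S v" using a(1) unfolding normal_cone_def by (simp add: inner_commute)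
    moreover have "normal_cone S v \<noteq> {}" using zero_in_normal_cone by blast
    ultimately obtain e where e: "1 < e" "(1 - e) *\<^sub>R (- a) + e *\<^sub>R 0 \<in> normal_cone S v"
      using convex_rel_interior_iff[OF convex_normal_cone] 0 by blast
    then have "(e - 1) *\<^sub>R a \<in> normal_cone S v" by (simp add: algebra_simps)
    moreover have "y0 \<in> S" using y0 rel_interior_subset by blast
    ultimately have "(e - 1) * (y0 \<bullet> a) \<le> (e - 1) * (v \<bullet> a)"
      unfolding normal_cone_def by simp
    then have "a \<bullet> y0 \<le> a \<bullet> v" using e(1) by (simp add: inner_commute)
    then show False using a(2)[OF y0] by simp
  qed
qed

lemma rel_interior_transfer_near:
  fixes S T :: "'a::euclidean_space set"
  assumes "convex S" "convex T" "x \<in> S" "0 < r" "S \<inter> ball x r = T \<inter> ball x r"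
    and "x \<in> rel_interior S"
  shows "x \<in> rel_interior T"
proof -
  have "affine hull S = affine hull T"
    using affine_hull_convex_Int_open[OF assms(1), of "ball x r"]
      affine_hull_convex_Int_open[OF assms(2), of "ball x r"] assms(3-5) by force
  obtain e where e: "0 < e" "ball x e \<inter> affine hull S \<subseteq> S"
    using assms(6) unfolding mem_rel_interior_ball by blast
  have "ball x (min e r) \<inter> affine hull T \<subseteq> T"
  proof
    fix z assume "z \<in> ball x (min e r) \<inter> affine hull T"
    then have "z \<in> S \<inter> ball x r" using e(2) \<open>affine hull S = affine hull T\<close> by auto
    then show "z \<in> T" using assms(5) by blast
  qed
  moreover have "x \<in> T" using assms(3,4,5) centre_in_ball[of x r] by blast
  ultimately show ?thesis
    unfolding mem_rel_interior_ball using e(1) assms(4) by (intro conjI exI[of _ "min e r"]) auto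
qed

section \<open>Epi-limits of second-order difference quotients\<close>

lemma mem_epi [simp]: "(w, r) \<in> epi h \<longleftrightarrow> h w \<le> ereal r"
  unfolding epi_def by simp

abbreviation epi_diffq2 :: "('a::real_inner \<Rightarrow> ereal) \<Rightarrow> real \<times> 'a \<times> 'a \<Rightarrow> ('a \<times> real) set" where
  "epi_diffq2 f \<equiv> \<lambda>(t, x, v). epi (diffq2 f x v t)"

lemma PK_liminfI: "eventually (\<lambda>p. y \<in> C p) F \<Longrightarrow> y \<in> PK_liminf C F"
  unfolding PK_liminf_def by (auto elim: eventually_mono)

lemma not_in_PK_limsupI:
  assumes "open U" "y \<in> U" "eventually (\<lambda>p. C p \<inter> U = {}) F"
  shows "y \<notin> PK_limsup C F"
  using assms unfolding PK_limsup_def frequently_def by auto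

lemma PK_liminf_subset_limsup: "F \<noteq> bot \<Longrightarrow> PK_liminf C F \<subseteq> PK_limsup C F"
  unfolding PK_liminf_def PK_limsup_def using eventually_frequently by blast

lemma PK_liminf_antimono: "F \<le> G \<Longrightarrow> PK_liminf C G \<subseteq> PK_liminf C F"
  unfolding PK_liminf_def using filter_leD by blast

lemma PK_limsup_mono: "F \<le> G \<Longrightarrow> PK_limsup C F \<subseteq> PK_limsup C G"
  unfolding PK_limsup_def frequently_def using filter_leD by blast

lemma PK_limsup_subset_closed:
  assumes "closed S" "eventually (\<lambda>p. C p \<subseteq> S) F"
  shows "PK_limsup C F \<subseteq> S"
proof
  fix y assume y: "y \<in> PK_limsup C F"
  have "eventually (\<lambda>p. C p \<inter> - S = {}) F" using assms(2) by (auto elim: eventually_mono)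
  then show "y \<in> S" using not_in_PK_limsupI[of "- S" y C F] assms(1) y by auto
qed

lemma eventually_strict_epi_filter:
  fixes f :: "'a::real_inner \<Rightarrow> ereal"
  assumes "0 < d"
  shows "eventually (\<lambda>(t, x, v). 0 < t \<and> t < d \<and> norm (x - xb) < d \<and> norm (v - vb) < d \<and>
    v \<in> subdiff f x) (strict_epi_filter f xb vb)"
proof -
  have "eventually (\<lambda>(t, x, v). 0 < t \<and> t < d \<and> norm (x - xb) < d \<and> norm (v - vb) < d \<and>
      v \<in> subdiff f x) (at (0, xb, vb) within {(t, x, v). 0 < t \<and> v \<in> subdiff f x})"
    unfolding eventually_at
  proof (intro exI[of _ d] conjI ballI impI)
    fix p :: "real \<times> 'a \<times> 'a"
    assume p: "p \<in> {(t, x, v). 0 < t \<and> v \<in> subdiff f x}" "p \<noteq> (0, xb, vb) \<and> dist p (0, xb, vb) < d"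
    obtain t x v where pe: "p = (t, x, v)" by (cases p)
    have "dist t 0 \<le> dist p (0, xb, vb)" "dist (x, v) (xb, vb) \<le> dist p (0, xb, vb)"
      using dist_fst_le[of p "(0, xb, vb)"] dist_snd_le[of p "(0, xb, vb)"] pe by simp_all
    moreover have "dist x xb \<le> dist (x, v) (xb, vb)" "dist v vb \<le> dist (x, v) (xb, vb)"
      using dist_fst_le[of "(x, v)" "(xb, vb)"] dist_snd_le[of "(x, v)" "(xb, vb)"] by simp_all
    ultimately show "case p of (t, x, v) \<Rightarrow> 0 < t \<and> t < d \<and> norm (x - xb) < d \<and>
        norm (v - vb) < d \<and> v \<in> subdiff f x"
      using p pe by (auto simp: dist_norm)
  qed (use assms in auto)
  then show ?thesis unfolding strict_epi_filter_def by (rule filter_leD[rotated]) simp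
qed

lemma strict_epi_filter_path:
  fixes f :: "'a::real_inner \<Rightarrow> ereal"
  assumes X: "(X \<longlongrightarrow> xb) (at_right 0)" and V: "(V \<longlongrightarrow> vb) (at_right 0)"
    and fX: "((\<lambda>s. f (X s)) \<longlongrightarrow> f xb) (at_right 0)"
    and sub: "eventually (\<lambda>s. V s \<in> subdiff f (X s)) (at_right (0::real))"
  shows "filtermap (\<lambda>s. (s, X s, V s)) (at_right 0) \<le> strict_epi_filter f xb vb"
  unfolding strict_epi_filter_def
proof (rule le_infI)
  have "filterlim (\<lambda>s. (s, X s, V s))
      (at (0, xb, vb) within {(t, x, v). 0 < t \<and> v \<in> subdiff f x}) (at_right 0)"
    unfolding filterlim_at
  proof
    show "\<forall>\<^sub>F s in at_right 0. (s, X s, V s) \<in> {(t, x, v). 0 < t \<and> v \<in> subdiff f x} \<and>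
        (s, X s, V s) \<noteq> (0, xb, vb)"
      using eventually_conj[OF sub eventually_at_right_less] by (rule eventually_mono) auto
    show "((\<lambda>s. (s, X s, V s)) \<longlongrightarrow> (0, xb, vb)) (at_right 0)"
      by (intro tendsto_Pair X V tendsto_ident_at)
  qed
  then show "filtermap (\<lambda>s. (s, X s, V s)) (at_right 0) \<le>
      at (0, xb, vb) within {(t, x, v). 0 < t \<and> v \<in> subdiff f x}"
    unfolding filterlim_def .
  have "filtermap (\<lambda>(t, x, v). f x) (filtermap (\<lambda>s. (s, X s, V s)) (at_right 0)) \<le> nhds (f xb)"
    using fX unfolding filterlim_def by (simp add: filtermap_filtermap)
  then show "filtermap (\<lambda>s. (s, X s, V s)) (at_right 0) \<le>
      filtercomap (\<lambda>(t, x, v). f x) (nhds (f xb))"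
    by (simp add: filtermap_le_iff_le_filtercomap)
qed

lemma filtermap_at_right_nontrivial: "filtermap g (at_right (0::real)) \<noteq> bot"
  by (simp add: filtermap_bot_iff)

lemma diffq2_eq_zero:
  assumes "f x = ereal a" "f (x + t *\<^sub>R w) = ereal (a + t * inner v w)"
  shows "diffq2 f x v t w = 0"
  unfolding diffq2_def using assms by (simp add: zero_ereal_def)

text \<open>A subgradient \<open>g\<close> of an affine piece through \<open>x\<close> makes the quotient
  blow up in directions where it exceeds \<open>v\<close>.\<close>
lemma diffq2_ge_gap:
  fixes f :: "'a::real_inner \<Rightarrow> ereal"
  assumes g: "g \<in> subdiff f y" and fx: "f x = f y + ereal (inner g (x - y))" and t: "0 < t"
  shows "ereal (2 * inner (g - v) w / t) \<le> diffq2 f x v t w"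
proof -
  obtain b where fy: "f y = ereal b" using subdiff_finite[OF g] by blast
  define a where "a = b + inner g (x - y)"
  have fa: "f x = ereal a" using fx fy a_def by simp
  have "f y + ereal (inner g (x + t *\<^sub>R w - y)) \<le> f (x + t *\<^sub>R w)" by (rule subdiff_ineq[OF g])
  then have le: "ereal (a + t * inner v w + t * inner (g - v) w) \<le> f (x + t *\<^sub>R w)"
    using fy by (simp add: a_def algebra_simps)
  show ?thesis
  proof (cases "f (x + t *\<^sub>R w)")
    case (real z)
    have "2 * inner (g - v) w / t = (t * inner (g - v) w) * (2 / t\<^sup>2)"
      using t by (simp add: power2_eq_square field_simps)
    also have "\<dots> \<le> (z - a - t * inner v w) * (2 / t\<^sup>2)"
      using le real t by (intro mult_right_mono) auto
    finally show ?thesis unfolding diffq2_def using fa real by simp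
  next
    case PInf
    then show ?thesis unfolding diffq2_def using fa t by simp
  qed (use le in simp)
qed

lemma diffq2_nonneg:
  assumes "v \<in> subdiff f x" "0 < t"
  shows "0 \<le> diffq2 f x v t w"
proof -
  obtain m where "f x = ereal m" using subdiff_finite[OF assms(1)] by blast
  then have "f x = f x + ereal (inner v (x - x))" by simp
  from diffq2_ge_gap[OF assms(1) this assms(2), of v w] show ?thesis by (simp add: zero_ereal_def)
qed

lemma strict_epi_limsup_nonneg:
  fixes f :: "'a::real_inner \<Rightarrow> ereal"
  assumes "(w, \<rho>) \<in> PK_limsup (epi_diffq2 f) (strict_epi_filter f xb vb)"
  shows "0 \<le> \<rho>"
proof -
  have "eventually (\<lambda>p. epi_diffq2 f p \<subseteq> UNIV \<times> {0..}) (strict_epi_filter f xb vb)"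
    using eventually_strict_epi_filter[OF zero_less_one, where f = f and xb = xb and vb = vb]
  proof (rule eventually_mono)
    fix p :: "real \<times> 'a \<times> 'a"
    assume "case p of (t, x, v) \<Rightarrow> 0 < t \<and> t < 1 \<and> norm (x - xb) < 1 \<and> norm (v - vb) < 1 \<and>
      v \<in> subdiff f x"
    then obtain t x v where p: "p = (t, x, v)" "0 < t" "v \<in> subdiff f x" by auto
    show "epi_diffq2 f p \<subseteq> UNIV \<times> {0..}"
    proof
      fix q assume "q \<in> epi_diffq2 f p"
      moreover obtain w' \<rho>' where q: "q = (w', \<rho>')" by (cases q)
      ultimately have "diffq2 f x v t w' \<le> ereal \<rho>'" using p(1) by simp
      with diffq2_nonneg[OF p(3,2)] have "0 \<le> ereal \<rho>'" by (rule order_trans)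
      then show "q \<in> UNIV \<times> {0..}" using q by simp
    qed
  qed
  then have "PK_limsup (epi_diffq2 f) (strict_epi_filter f xb vb) \<subseteq> UNIV \<times> {0..}"
    by (intro PK_limsup_subset_closed closed_Times) auto
  then show ?thesis using assms by auto
qed

lemma inner_gap_nbhd:
  fixes g vb w :: "'a::real_inner"
  assumes "0 < inner (g - vb) w"
  obtains d S where "0 < d" "open S" "w \<in> S"
    "\<And>v w'. norm (v - vb) < d \<Longrightarrow> w' \<in> S \<Longrightarrow> inner (g - vb) w / 2 < inner (g - v) w'"
proof -
  have "open {p. inner (g - vb) w / 2 < inner (g - fst p) (snd p)}"
    by (intro open_Collect_less continuous_intros)
  moreover have "(vb, w) \<in> {p. inner (g - vb) w / 2 < inner (g - fst p) (snd p)}"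
    using assms by simp
  ultimately obtain A S where AS: "open A" "open S" "(vb, w) \<in> A \<times> S"
      "A \<times> S \<subseteq> {p. inner (g - vb) w / 2 < inner (g - fst p) (snd p)}"
    by (rule open_prod_elim)
  have "vb \<in> A" using AS(3) by simp
  with AS(1) obtain d where d: "0 < d" "ball vb d \<subseteq> A" by (rule openE)
  show ?thesis
  proof (rule that[OF d(1) AS(2)])
    show "w \<in> S" using AS(3) by simp
    fix v w' assume "norm (v - vb) < d" "w' \<in> S"
    then have "(v, w') \<in> A \<times> S" using d(2) by (auto simp: dist_norm norm_minus_commute)
    then show "inner (g - vb) w / 2 < inner (g - v) w'" using AS(4) by auto
  qed
qed

lemma diffq2_gap_large:
  fixes f :: "'a::real_inner \<Rightarrow> ereal"
  assumes g: "g \<in> subdiff f xb" and fx: "f x = f xb + ereal (inner g (x - xb))" and t: "0 < t"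
    and gap: "\<gamma> / 2 < inner (g - v) w" and small: "t * (\<bar>\<rho>\<bar> + 1) < \<gamma>"
  shows "ereal (\<rho> + 1) < diffq2 f x v t w"
proof -
  have "t * (\<rho> + 1) \<le> t * (\<bar>\<rho>\<bar> + 1)" using t by (simp add: mult_left_mono)
  then have "t * (\<rho> + 1) \<le> \<gamma>" using small by linarith
  then have "\<rho> + 1 \<le> \<gamma> / t" using t by (simp add: le_divide_eq mult.commute)
  also have "\<gamma> / t < 2 * inner (g - v) w / t" using gap t by (simp add: divide_strict_right_mono)
  finally have "ereal (\<rho> + 1) < ereal (2 * inner (g - v) w / t)" by simp
  also have "\<dots> \<le> diffq2 f x v t w" by (rule diffq2_ge_gap[OF g fx t])
  finally show ?thesis .
qed

lemma not_in_limsup_gap: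
  fixes f :: "'a::real_inner \<Rightarrow> ereal"
  assumes g: "g \<in> subdiff f xb" and gap: "0 < inner (g - vb) w"
    and le: "\<Phi> \<le> strict_epi_filter f xb vb"
    and affine: "eventually (\<lambda>(t, x, v). f x = f xb + ereal (inner g (x - xb))) \<Phi>"
  shows "(w, \<rho>) \<notin> PK_limsup (epi_diffq2 f) \<Phi>"
proof -
  define \<gamma> where "\<gamma> = inner (g - vb) w"
  obtain d S where dS: "0 < d" "open S" "w \<in> S"
    "\<And>v w'. norm (v - vb) < d \<Longrightarrow> w' \<in> S \<Longrightarrow> \<gamma> / 2 < inner (g - v) w'"
    using inner_gap_nbhd[OF gap] unfolding \<gamma>_def by blast
  define d' where "d' = min d (\<gamma> / (\<bar>\<rho>\<bar> + 1))"
  have d': "0 < d'" unfolding d'_def \<gamma>_def using dS(1) gap by simp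
  have "eventually (\<lambda>(t, x, v). 0 < t \<and> t < d' \<and> norm (v - vb) < d' \<and>
      f x = f xb + ereal (inner g (x - xb))) \<Phi>"
    using eventually_conj[OF filter_leD[OF le eventually_strict_epi_filter[OF d']] affine]
    by (rule eventually_mono) auto
  then have "eventually (\<lambda>p. epi_diffq2 f p \<inter> (S \<times> {..<\<rho> + 1}) = {}) \<Phi>"
  proof (rule eventually_mono)
    fix p :: "real \<times> 'a \<times> 'a"
    assume "case p of (t, x, v) \<Rightarrow> 0 < t \<and> t < d' \<and> norm (v - vb) < d' \<and>
      f x = f xb + ereal (inner g (x - xb))"
    then obtain t x v where p: "p = (t, x, v)" "0 < t" "t < d'" "norm (v - vb) < d'"
        "f x = f xb + ereal (inner g (x - xb))"
      by (cases p) auto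
    have big: "ereal (\<rho> + 1) < diffq2 f x v t w'" if "w' \<in> S" for w'
    proof (rule diffq2_gap_large[OF g p(5) p(2)])
      show "\<gamma> / 2 < inner (g - v) w'" using dS(4)[of v w'] p(4) that unfolding d'_def by simp
      show "t * (\<bar>\<rho>\<bar> + 1) < \<gamma>" using p(3) unfolding d'_def by (simp add: pos_less_divide_eq)
    qed
    show "epi_diffq2 f p \<inter> (S \<times> {..<\<rho> + 1}) = {}"
    proof (rule ccontr)
      assume "epi_diffq2 f p \<inter> (S \<times> {..<\<rho> + 1}) \<noteq> {}"
      then obtain w' \<rho>' where w': "w' \<in> S" "\<rho>' < \<rho> + 1" "diffq2 f x v t w' \<le> ereal \<rho>'"
        using p(1) by auto
      have "ereal (\<rho> + 1) < ereal \<rho>'" using big[OF w'(1)] w'(3) by (rule less_le_trans)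
      then show False using w'(2) by simp
    qed
  qed
  then show ?thesis using dS(2,3) by (intro not_in_PK_limsupI[of "S \<times> {..<\<rho> + 1}"] open_Times) auto
qed

section \<open>Strict twice epi-differentiability\<close>

lemma small_steps_in_ball:
  fixes w :: "'a::real_normed_vector"
  assumes "0 < r"
  obtains d where "0 < d" "\<And>u t. norm u < d \<Longrightarrow> 0 \<le> t \<Longrightarrow> t < d \<Longrightarrow> norm (u + t *\<^sub>R w) < r"
proof -
  define d where "d = r / (2 * (norm w + 1))"
  have nz: "0 < norm w + 1" using norm_ge_zero[of w] by linarith
  have d: "0 < d" using assms nz unfolding d_def by simp
  have "d * (norm w + 1) = r / 2" unfolding d_def using nz by (simp add: field_simps)
  then have dw: "d + d * norm w = r / 2" by (simp add: algebra_simps)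
  show ?thesis
  proof (rule that[OF d])
    fix u :: 'a and t :: real assume u: "norm u < d" and t: "0 \<le> t" "t < d"
    have "norm (u + t *\<^sub>R w) \<le> norm u + t * norm w"
      using norm_triangle_ineq[of u "t *\<^sub>R w"] t(1) by simp
    also have "\<dots> \<le> norm u + d * norm w" using t(2) by (simp add: mult_right_mono)
    also have "\<dots> < d + d * norm w" using u by simp
    finally show "norm (u + t *\<^sub>R w) < r" using dw assms by simp
  qed
qed

lemma strict_epi_filter_const_path:
  fixes f :: "'a::real_inner \<Rightarrow> ereal"
  assumes "vb \<in> subdiff f xb"
  shows "filtermap (\<lambda>s. (s, xb, vb)) (at_right 0) \<le> strict_epi_filter f xb vb"
  by (rule strict_epi_filter_path) (use assms in auto)

lemma strict_epi_filter_nontrivial: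
  fixes f :: "'a::real_inner \<Rightarrow> ereal"
  assumes "vb \<in> subdiff f xb"
  shows "strict_epi_filter f xb vb \<noteq> bot"
proof
  assume "strict_epi_filter f xb vb = bot"
  with strict_epi_filter_const_path[OF assms]
  have "filtermap (\<lambda>s. (s, xb, vb)) (at_right (0::real)) = bot" by (simp add: bot_unique)
  then show False using filtermap_at_right_nontrivial by blast
qed

lemma support_model_subdiff_eq:
  fixes f :: "'a::euclidean_space \<Rightarrow> ereal"
  assumes M: "support_model f xb F r" and z: "norm (z - xb) < r"
    and l: "l \<in> subdiff f z" "l \<in> rel_interior F"
  shows "subdiff f z = F"
proof -
  have cvx: "convex F" using M unfolding support_model_def by blast
  have sub: "v \<in> subdiff f z \<longleftrightarrow> v \<in> F \<and> z - xb \<in> normal_cone F v" for v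
    using support_model_subdiff_iff[OF M z, of v] by simp
  have "z - xb \<in> normal_cone F l" using sub l(1) by blast
  then have "z - xb \<in> normal_cone F v" if "v \<in> F" for v
    using normal_cone_rel_interior_subset[OF cvx l(2) that] by blast
  then show ?thesis using sub by blast
qed

lemma support_model_near_rel_interior:
  fixes f :: "'a::euclidean_space \<Rightarrow> ereal"
  assumes M: "support_model f xb F r" and vb: "vb \<in> rel_interior F"
  obtains d where "0 < d"
    "\<And>x v. norm (x - xb) < d \<Longrightarrow> norm (v - vb) < d \<Longrightarrow> v \<in> subdiff f x \<Longrightarrow>
      v \<in> rel_interior F \<and> x - xb \<in> normal_cone F vb \<and> f x = f xb + ereal (inner v (x - xb))"
proof -
  have r: "0 < r" using M unfolding support_model_def by blast
  obtain e where e: "0 < e" "\<And>y. y \<in> F \<Longrightarrow> dist y vb < e \<Longrightarrow> y \<in> rel_interior F"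
    using rel_interior_nbhd[OF vb] by blast
  show ?thesis
  proof (rule that[of "min r e"])
    fix x v assume x: "norm (x - xb) < min r e" and v: "norm (v - vb) < min r e" "v \<in> subdiff f x"
    have xr: "norm (x - xb) < r" using x by simp
    have vF: "v \<in> F" "x - xb \<in> normal_cone F v"
      using support_model_subdiff_iff[OF M xr, of v] v(2) by simp_all
    have vri: "v \<in> rel_interior F" using e(2)[OF vF(1)] v(1) by (simp add: dist_norm)
    have "subdiff f x = F" by (rule support_model_subdiff_eq[OF M xr v(2) vri])
    then have "x - xb \<in> normal_cone F vb"
      using support_model_subdiff_iff[OF M xr, of vb] vb rel_interior_subset by auto
    moreover have "f x = f xb + ereal (inner v (x - xb))" using support_model_value[OF M xr vF]
      by simp
    ultimately show "v \<in> rel_interior F \<and> x - xb \<in> normal_cone F vb \<and>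
        f x = f xb + ereal (inner v (x - xb))"
      using vri by blast
  qed (use r e in auto)
qed

lemma support_model_liminf:
  fixes f :: "'a::euclidean_space \<Rightarrow> ereal"
  assumes M: "support_model f xb F r" and vb: "vb \<in> rel_interior F"
    and w: "w \<in> normal_cone F vb" and \<rho>: "0 \<le> \<rho>"
  shows "(w, \<rho>) \<in> PK_liminf (epi_diffq2 f) (strict_epi_filter f xb vb)"
proof (rule PK_liminfI)
  have cvx: "convex F" and r: "0 < r" using M unfolding support_model_def by blast+
  obtain m where m: "f xb = ereal m"
    using support_model_subdiff[OF M] vb rel_interior_subset subdiff_finite by blast
  obtain d where d: "0 < d"
    "\<And>x v. norm (x - xb) < d \<Longrightarrow> norm (v - vb) < d \<Longrightarrow> v \<in> subdiff f x \<Longrightarrow>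
      v \<in> rel_interior F \<and> x - xb \<in> normal_cone F vb \<and> f x = f xb + ereal (inner v (x - xb))"
    using support_model_near_rel_interior[OF M vb] by blast
  obtain d2 where d2: "0 < d2" "\<And>u t. norm u < d2 \<Longrightarrow> 0 \<le> t \<Longrightarrow> t < d2 \<Longrightarrow> norm (u + t *\<^sub>R w) < r"
    using small_steps_in_ball[OF r] by blast
  have "0 < min d d2" using d(1) d2(1) by simp
  then show "eventually (\<lambda>p. (w, \<rho>) \<in> epi_diffq2 f p) (strict_epi_filter f xb vb)"
  proof (rule eventually_mono[OF eventually_strict_epi_filter])
    fix p :: "real \<times> 'a \<times> 'a"
    assume "case p of (t, x, v) \<Rightarrow> 0 < t \<and> t < min d d2 \<and> norm (x - xb) < min d d2 \<and>
      norm (v - vb) < min d d2 \<and> v \<in> subdiff f x"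
    then obtain t x v where p: "p = (t, x, v)" "0 < t" "t < min d d2" "norm (x - xb) < min d d2"
        "norm (v - vb) < min d d2" "v \<in> subdiff f x"
      by (cases p) auto
    have near: "v \<in> rel_interior F" "x - xb \<in> normal_cone F vb"
        "f x = ereal (m + inner v (x - xb))"
      using d(2)[of x v] p m by auto
    have step: "norm (x - xb + t *\<^sub>R w) < r" using d2(2)[of "x - xb" t] p by auto
    have "x - xb + t *\<^sub>R w \<in> normal_cone F vb"
      by (rule normal_cone_rel_interior_add[OF cvx vb near(2) w])
    then have N: "x - xb + t *\<^sub>R w \<in> normal_cone F v"
      using normal_cone_rel_interior_subset[OF cvx vb] near(1) rel_interior_subset by blast
    have "f (xb + (x - xb + t *\<^sub>R w)) = f xb + ereal (inner v (x - xb + t *\<^sub>R w))"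
      using support_model_value[OF M step _ N] near(1) rel_interior_subset by blast
    then have "f (x + t *\<^sub>R w) = ereal ((m + inner v (x - xb)) + t * inner v w)"
      using m by (simp add: inner_add_right)
    with near(3) have "diffq2 f x v t w = 0" by (rule diffq2_eq_zero)
    then show "(w, \<rho>) \<in> epi_diffq2 f p" using p(1) \<rho> by (simp add: zero_ereal_def)
  qed
qed

lemma support_model_limsup:
  fixes f :: "'a::euclidean_space \<Rightarrow> ereal"
  assumes M: "support_model f xb F r" and vb: "vb \<in> rel_interior F"
    and lim: "(w, \<rho>) \<in> PK_limsup (epi_diffq2 f) (strict_epi_filter f xb vb)"
  shows "w \<in> normal_cone F vb"
proof (rule ccontr)
  assume "w \<notin> normal_cone F vb"
  then obtain g where g: "g \<in> F" "inner vb w < inner g w" unfolding normal_cone_def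
    by (auto simp: not_le)
  have cvx: "convex F" using M unfolding support_model_def by blast
  obtain d where d: "0 < d"
    "\<And>x v. norm (x - xb) < d \<Longrightarrow> norm (v - vb) < d \<Longrightarrow> v \<in> subdiff f x \<Longrightarrow>
      v \<in> rel_interior F \<and> x - xb \<in> normal_cone F vb \<and> f x = f xb + ereal (inner v (x - xb))"
    using support_model_near_rel_interior[OF M vb] by blast
  have "eventually (\<lambda>(t, x, v). f x = f xb + ereal (inner g (x - xb))) (strict_epi_filter f xb vb)"
    using eventually_strict_epi_filter[OF d(1)]
  proof (rule eventually_mono, clarify)
    fix t x v assume "norm (x - xb) < d" "norm (v - vb) < d" "v \<in> subdiff f x"
    then have near: "v \<in> rel_interior F" "x - xb \<in> normal_cone F vb"
        "f x = f xb + ereal (inner v (x - xb))"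
      using d(2) by blast+
    have "inner v (x - xb) = inner vb (x - xb)" "inner g (x - xb) = inner vb (x - xb)"
      using rel_interior_normal_cone[OF cvx vb near(2)] near(1) rel_interior_subset g(1) by blast+
    then show "f x = f xb + ereal (inner g (x - xb))" using near(3) by simp
  qed
  moreover have "g \<in> subdiff f xb" using support_model_subdiff[OF M] g(1) by simp
  moreover have "0 < inner (g - vb) w" using g(2) by (simp add: inner_diff_left)
  ultimately show False using not_in_limsup_gap[OF _ _ order_refl] lim by blast
qed

lemma support_model_strictly_twice_epi_diff:
  fixes f :: "'a::euclidean_space \<Rightarrow> ereal"
  assumes M: "support_model f xb F r" and vb: "vb \<in> rel_interior F"
  shows "strictly_twice_epi_diff f xb vb"
proof -
  define h :: "'a \<Rightarrow> ereal" where "h w = (if w \<in> normal_cone F vb then 0 else \<infinity>)" for w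
  have epi_h: "(w, \<rho>) \<in> epi h \<longleftrightarrow> w \<in> normal_cone F vb \<and> 0 \<le> \<rho>" for w \<rho>
    by (simp add: h_def zero_ereal_def)
  have vbF: "vb \<in> subdiff f xb" using support_model_subdiff[OF M] vb rel_interior_subset by blast
  let ?C = "epi_diffq2 f" and ?\<Phi> = "strict_epi_filter f xb vb"
  have "epi h \<subseteq> PK_liminf ?C ?\<Phi>"
    using support_model_liminf[OF M vb] epi_h by auto
  moreover have "PK_limsup ?C ?\<Phi> \<subseteq> epi h"
    using support_model_limsup[OF M vb] strict_epi_limsup_nonneg epi_h by auto
  moreover have "PK_liminf ?C ?\<Phi> \<subseteq> PK_limsup ?C ?\<Phi>"
    by (rule PK_liminf_subset_limsup[OF strict_epi_filter_nontrivial[OF vbF]])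
  ultimately have "PK_converges ?C ?\<Phi> (epi h)" unfolding PK_converges_def by blast
  then show ?thesis unfolding strictly_twice_epi_diff_def using vbF by blast
qed

lemma support_model_normal_path:
  fixes f :: "'a::euclidean_space \<Rightarrow> ereal"
  assumes M: "support_model f xb F r" and vbF: "vb \<in> F" and u: "u \<in> normal_cone F vb"
  defines "\<Phi> \<equiv> filtermap (\<lambda>s. (s, xb + s *\<^sub>R u, vb)) (at_right 0)"
  shows "\<Phi> \<le> strict_epi_filter f xb vb" "(- u, 0) \<in> PK_liminf (epi_diffq2 f) \<Phi>"
proof -
  have r: "0 < r" using M unfolding support_model_def by blast
  obtain m where m: "f xb = ereal m"
    using subdiff_finite vbF support_model_subdiff[OF M] by blast
  obtain d where d: "0 < d" "\<And>u' t. norm u' < d \<Longrightarrow> 0 \<le> t \<Longrightarrow> t < d \<Longrightarrow> norm (u' + t *\<^sub>R u) < r"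
    using small_steps_in_ball[OF r] by blast
  have path: "vb \<in> subdiff f (xb + s *\<^sub>R u) \<and> f (xb + s *\<^sub>R u) = ereal (m + s * inner vb u)"
    if "0 < s" "s < d" for s
  proof -
    have nr: "norm (s *\<^sub>R u) < r" using d(2)[of 0 s] that d(1) by simp
    have "s *\<^sub>R u \<in> normal_cone F vb" using normal_cone_scale[OF u] that by simp
    then show ?thesis
      using support_model_subdiff_iff[OF M nr] support_model_value[OF M nr vbF] vbF m by simp
  qed
  have small: "eventually (\<lambda>s. 0 < s \<and> s < d) (at_right (0::real))"
    using d(1) unfolding eventually_at_right_field by (intro exI[of _ d]) auto
  show "\<Phi> \<le> strict_epi_filter f xb vb"
    unfolding \<Phi>_def
  proof (rule strict_epi_filter_path)
    have "((\<lambda>s. xb + s *\<^sub>R u) \<longlongrightarrow> xb + 0 *\<^sub>R u) (at_right 0)"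
      by (intro tendsto_intros tendsto_ident_at)
    then show "((\<lambda>s. xb + s *\<^sub>R u) \<longlongrightarrow> xb) (at_right 0)" by simp
    have "((\<lambda>s. ereal (m + s * inner vb u)) \<longlongrightarrow> ereal (m + 0 * inner vb u)) (at_right 0)"
      unfolding lim_ereal by (intro tendsto_intros tendsto_ident_at)
    then have "((\<lambda>s. ereal (m + s * inner vb u)) \<longlongrightarrow> f xb) (at_right 0)" using m by simp
    moreover have "eventually (\<lambda>s. ereal (m + s * inner vb u) = f (xb + s *\<^sub>R u)) (at_right 0)"
      using small path by (auto elim: eventually_mono)
    ultimately show "((\<lambda>s. f (xb + s *\<^sub>R u)) \<longlongrightarrow> f xb) (at_right 0)"
      by (rule Lim_transform_eventually)
    show "eventually (\<lambda>s. vb \<in> subdiff f (xb + s *\<^sub>R u)) (at_right 0)"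
      using small path by (auto elim: eventually_mono)
  qed simp
  have "eventually (\<lambda>s. (- u, 0) \<in> epi_diffq2 f (s, xb + s *\<^sub>R u, vb)) (at_right 0)"
    using small
  proof (rule eventually_mono)
    fix s :: real assume s: "0 < s \<and> s < d"
    have "f (xb + s *\<^sub>R u + s *\<^sub>R - u) = ereal ((m + s * inner vb u) + s * inner vb (- u))"
      using m by simp
    then have "diffq2 f (xb + s *\<^sub>R u) vb s (- u) = 0" using path s by (intro diffq2_eq_zero) auto
    then show "(- u, 0) \<in> epi_diffq2 f (s, xb + s *\<^sub>R u, vb)" by (simp add: zero_ereal_def)
  qed
  then show "(- u, 0) \<in> PK_liminf (epi_diffq2 f) \<Phi>"
    unfolding \<Phi>_def by (intro PK_liminfI) (simp add: eventually_filtermap)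
qed

text \<open>At a relative boundary point \<open>vb\<close> of \<open>F\<close>, an outer normal \<open>a\<close> of a supporting
  hyperplane gives a path \<open>xb - s a\<close> along which \<open>(a, 0)\<close> lies in the epigraphs, whereas at
  \<open>xb\<close> itself the quotients blow up near \<open>a\<close>: the epigraphs cannot converge.\<close>
lemma support_model_not_strictly_twice_epi_diff:
  fixes f :: "'a::euclidean_space \<Rightarrow> ereal"
  assumes M: "support_model f xb F r" and vbF: "vb \<in> F" and vb: "vb \<notin> rel_interior F"
  shows "\<not> strictly_twice_epi_diff f xb vb"
proof
  assume "strictly_twice_epi_diff f xb vb"
  then obtain h where conv: "PK_converges (epi_diffq2 f) (strict_epi_filter f xb vb) (epi h)"
    unfolding strictly_twice_epi_diff_def by blast
  have cvx: "convex F" using M unfolding support_model_def by blast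
  have sd: "subdiff f xb = F" by (rule support_model_subdiff[OF M])
  obtain a where a: "\<And>y. y \<in> F \<Longrightarrow> a \<bullet> vb \<le> a \<bullet> y" "\<And>y. y \<in> rel_interior F \<Longrightarrow> a \<bullet> vb < a \<bullet> y"
    using supporting_hyperplane_rel_boundary[OF cvx vbF vb] by metis
  obtain g where g: "g \<in> rel_interior F" using rel_interior_eq_empty cvx vbF by blast
  have "inner (g - vb) a = a \<bullet> g - a \<bullet> vb" by (simp add: inner_commute inner_diff_right)
  then have gap: "0 < inner (g - vb) a" using a(2)[OF g] by simp
  have N: "- a \<in> normal_cone F vb" using a(1) unfolding normal_cone_def by (simp add: inner_commute)
  define \<Phi>1 where "\<Phi>1 = filtermap (\<lambda>s. (s, xb + s *\<^sub>R - a, vb)) (at_right 0)"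
  define \<Phi>2 where "\<Phi>2 = filtermap (\<lambda>s. (s, xb, vb)) (at_right (0::real))"
  note path = support_model_normal_path[OF M vbF N, folded \<Phi>1_def]
  have \<Phi>2: "\<Phi>2 \<le> strict_epi_filter f xb vb"
    unfolding \<Phi>2_def using strict_epi_filter_const_path vbF sd by blast
  have "(a, 0) \<in> PK_liminf (epi_diffq2 f) \<Phi>1" using path(2) by simp
  also have "\<dots> \<subseteq> PK_limsup (epi_diffq2 f) \<Phi>1"
    unfolding \<Phi>1_def by (rule PK_liminf_subset_limsup[OF filtermap_at_right_nontrivial])
  also have "\<dots> \<subseteq> PK_limsup (epi_diffq2 f) (strict_epi_filter f xb vb)"
    by (rule PK_limsup_mono[OF path(1)])
  also have "\<dots> = PK_liminf (epi_diffq2 f) (strict_epi_filter f xb vb)"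
    using conv unfolding PK_converges_def by simp
  also have "\<dots> \<subseteq> PK_liminf (epi_diffq2 f) \<Phi>2"
    by (rule PK_liminf_antimono[OF \<Phi>2])
  also have "\<dots> \<subseteq> PK_limsup (epi_diffq2 f) \<Phi>2"
    unfolding \<Phi>2_def by (rule PK_liminf_subset_limsup[OF filtermap_at_right_nontrivial])
  finally have "(a, 0) \<in> PK_limsup (epi_diffq2 f) \<Phi>2" .
  moreover have "(a, 0) \<notin> PK_limsup (epi_diffq2 f) \<Phi>2"
  proof (rule not_in_limsup_gap[OF _ gap \<Phi>2])
    show "g \<in> subdiff f xb" using g rel_interior_subset sd by blast
    show "eventually (\<lambda>(t, x, v). f x = f xb + ereal (inner g (x - xb))) \<Phi>2"
      unfolding \<Phi>2_def eventually_filtermap by (simp add: zero_ereal_def)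
  qed
  ultimately show False by blast
qed

theorem support_model_strictly_twice_epi_diff_iff:
  fixes f :: "'a::euclidean_space \<Rightarrow> ereal"
  assumes "support_model f x F r" "v \<in> F"
  shows "strictly_twice_epi_diff f x v \<longleftrightarrow> v \<in> rel_interior F"
  using support_model_strictly_twice_epi_diff[OF assms(1)]
    support_model_not_strictly_twice_epi_diff[OF assms] by blast

theorem polyhedral_strictly_twice_epi_diff_near_iff:
  fixes f :: "'a::euclidean_space \<Rightarrow> ereal"
  assumes poly: "polyhedral_fun f" and gph: "(xb, vb) \<in> gph_subdiff f"
  shows "(\<exists>N. open N \<and> (xb, vb) \<in> N \<and>
      (\<forall>z l. (z, l) \<in> N \<inter> gph_subdiff f \<longrightarrow> strictly_twice_epi_diff f z l))
    \<longleftrightarrow> vb \<in> rel_interior (subdiff f xb)"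
proof -
  have vb: "vb \<in> subdiff f xb" using gph unfolding gph_subdiff_def by simp
  obtain F r where M: "support_model f xb F r" using polyhedral_fun_support_model[OF poly vb] .
  have sd: "subdiff f xb = F" by (rule support_model_subdiff[OF M])
  show ?thesis
  proof
    assume "\<exists>N. open N \<and> (xb, vb) \<in> N \<and>
      (\<forall>z l. (z, l) \<in> N \<inter> gph_subdiff f \<longrightarrow> strictly_twice_epi_diff f z l)"
    then have "strictly_twice_epi_diff f xb vb" using gph by blast
    then show "vb \<in> rel_interior (subdiff f xb)"
      using support_model_strictly_twice_epi_diff_iff[OF M] vb sd by simp
  next
    assume "vb \<in> rel_interior (subdiff f xb)"
    then have vri: "vb \<in> rel_interior F" using sd by simp
    obtain e where e: "0 < e" "\<And>y. y \<in> F \<Longrightarrow> dist y vb < e \<Longrightarrow> y \<in> rel_interior F"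
      using rel_interior_nbhd[OF vri] by blast
    have r: "0 < r" using M unfolding support_model_def by blast
    have "strictly_twice_epi_diff f z l"
      if zl: "(z, l) \<in> (ball xb r \<times> ball vb e) \<inter> gph_subdiff f" for z l
    proof -
      have l: "l \<in> subdiff f z" using zl unfolding gph_subdiff_def by simp
      have z: "norm (z - xb) < r" using zl by (simp add: dist_norm norm_minus_commute)
      have "l \<in> F" using support_model_subdiff_iff[OF M z, of l] l by simp
      then have lri: "l \<in> rel_interior F" using e(2) zl by (simp add: dist_commute)
      have sdz: "subdiff f z = F" by (rule support_model_subdiff_eq[OF M z l lri])
      obtain F' r' where M': "support_model f z F' r'"
        using polyhedral_fun_support_model[OF poly l] .
      have "F' = F" using support_model_subdiff[OF M'] sdz by simp
      then show ?thesis using support_model_strictly_twice_epi_diff[OF M'] lri by simp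
    qed
    moreover have "open (ball xb r \<times> ball vb e)" by (intro open_Times) auto
    moreover have "(xb, vb) \<in> ball xb r \<times> ball vb e" using r e(1) by simp
    ultimately show "\<exists>N. open N \<and> (xb, vb) \<in> N \<and>
        (\<forall>z l. (z, l) \<in> N \<inter> gph_subdiff f \<longrightarrow> strictly_twice_epi_diff f z l)"
      by blast
  qed
qed

section \<open>Conjugates of polyhedral functions\<close>

lemma fenchel_young: "ereal (inner l z) - g z \<le> fconj g l"
  unfolding fconj_def by (rule SUP_upper) simp

lemma fconj_le_iff: "fconj g l \<le> s \<longleftrightarrow> (\<forall>z. ereal (inner l z) - g z \<le> s)"
  unfolding fconj_def by (simp add: SUP_le_iff)

lemma subdiff_iff_fconj_eq:
  fixes g :: "'a::real_inner \<Rightarrow> ereal"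
  assumes gz: "g z = ereal a"
  shows "l \<in> subdiff g z \<longleftrightarrow> fconj g l = ereal (inner l z - a)"
proof
  assume l: "l \<in> subdiff g z"
  have "fconj g l \<le> ereal (inner l z - a)"
    unfolding fconj_le_iff
  proof
    fix y
    have "g z + ereal (inner l (y - z)) \<le> g y" by (rule subdiff_ineq[OF l])
    then show "ereal (inner l y) - g y \<le> ereal (inner l z - a)"
      using gz by (cases "g y") (auto simp: inner_diff_right)
  qed
  moreover have "ereal (inner l z - a) \<le> fconj g l" using fenchel_young[of l z g] gz by simp
  ultimately show "fconj g l = ereal (inner l z - a)" by simp
next
  assume fc: "fconj g l = ereal (inner l z - a)"
  show "l \<in> subdiff g z" unfolding subdiff_def
  proof (intro CollectI conjI allI)
    show "\<bar>g z\<bar> \<noteq> \<infinity>" using gz by simp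
    fix y
    have "ereal (inner l y) - g y \<le> ereal (inner l z - a)" using fenchel_young[of l y g] fc by simp
    then show "g z + ereal (inner l (y - z)) \<le> g y"
      using gz by (cases "g y") (auto simp: inner_diff_right)
  qed
qed

lemma subdiff_fconj_iff:
  fixes g :: "'a::real_inner \<Rightarrow> ereal"
  assumes proper: "proper_fun g" and biconj: "\<And>y. g y \<le> fconj (fconj g) y"
  shows "z \<in> subdiff (fconj g) l \<longleftrightarrow> l \<in> subdiff g z"
proof
  assume z: "z \<in> subdiff (fconj g) l"
  then obtain c where c: "fconj g l = ereal c" using subdiff_finite by blast
  have "fconj (fconj g) z \<le> ereal (inner z l - c)"
    unfolding fconj_le_iff
  proof
    fix \<mu>
    have "fconj g l + ereal (inner z (\<mu> - l)) \<le> fconj g \<mu>" by (rule subdiff_ineq[OF z])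
    then show "ereal (inner z \<mu>) - fconj g \<mu> \<le> ereal (inner z l - c)"
      using c by (cases "fconj g \<mu>") (auto simp: inner_diff_right)
  qed
  then have le: "g z \<le> ereal (inner z l - c)" using biconj[of z] by simp
  then obtain a where gz: "g z = ereal a"
    using proper unfolding proper_fun_def by (cases "g z") auto
  have "ereal (inner l z) - g z \<le> fconj g l" by (rule fenchel_young)
  then have "c = inner l z - a" using gz c le by (simp add: inner_commute)
  then show "l \<in> subdiff g z" using subdiff_iff_fconj_eq[where g = g and z = z, OF gz] c by simp
next
  assume l: "l \<in> subdiff g z"
  then obtain a where gz: "g z = ereal a" using subdiff_finite by blast
  have fc: "fconj g l = ereal (inner l z - a)"
    using subdiff_iff_fconj_eq[where g = g and z = z, OF gz] l by simp
  show "z \<in> subdiff (fconj g) l" unfolding subdiff_def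
  proof (intro CollectI conjI allI)
    show "\<bar>fconj g l\<bar> \<noteq> \<infinity>" using fc by simp
    fix \<mu>
    have "ereal (inner \<mu> z) - g z \<le> fconj g \<mu>" by (rule fenchel_young)
    then show "fconj g l + ereal (inner z (\<mu> - l)) \<le> fconj g \<mu>"
      using fc gz by (simp add: inner_diff_right inner_commute)
  qed
qed

lemma fconj_fconj_piecewise_affine_outside:
  fixes A B :: "('a::real_inner \<times> real) set"
  assumes A: "finite A" "A \<noteq> {}" and z: "z \<notin> ineq_set B"
  defines "g \<equiv> piecewise_affine A B"
  shows "fconj (fconj g) z = \<infinity>"
proof -
  obtain c d where cd: "(c, d) \<in> B" "d < inner c z" using z unfolding ineq_set_def by auto
  obtain a b where ab: "(a, b) \<in> A" using A by auto
  have bound: "fconj g (a + s *\<^sub>R c) \<le> ereal (s * d - b)" if s: "0 \<le> s" for s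
    unfolding fconj_le_iff
  proof
    fix y show "ereal (inner (a + s *\<^sub>R c) y) - g y \<le> ereal (s * d - b)"
    proof (cases "y \<in> ineq_set B")
      case True
      have "s * inner c y \<le> s * d" using True cd s unfolding ineq_set_def
        by (auto intro: mult_left_mono)
      moreover have "inner a y + b \<le> max_affine A y" by (rule max_affine_ge[OF A(1) ab])
      ultimately show ?thesis using True unfolding g_def piecewise_affine_def
        by (simp add: inner_add_left)
    next
      case False then show ?thesis unfolding g_def piecewise_affine_def by simp
    qed
  qed
  show ?thesis
  proof (rule ereal_top)
    fix K :: real
    define s where "s = (\<bar>K - inner z a - b\<bar> + 1) / (inner c z - d)"
    have pos: "0 < inner c z - d" using cd by simp
    then have s: "0 \<le> s" "s * (inner c z - d) = \<bar>K - inner z a - b\<bar> + 1" unfolding s_def by simp_all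
    have "ereal K \<le> ereal (inner z (a + s *\<^sub>R c) - (s * d - b))"
      using s(2) by (simp add: inner_commute algebra_simps)
    also have "\<dots> \<le> ereal (inner z (a + s *\<^sub>R c)) - fconj g (a + s *\<^sub>R c)"
      using bound[OF s(1)] by (cases "fconj g (a + s *\<^sub>R c)") auto
    also have "\<dots> \<le> fconj (fconj g) z" by (rule fenchel_young)
    finally show "ereal K \<le> fconj (fconj g) z" .
  qed
qed

lemma piecewise_affine_le_biconj:
  fixes A B :: "('a::real_inner \<times> real) set"
  assumes A: "finite A" "A \<noteq> {}"
  defines "g \<equiv> piecewise_affine A B"
  shows "g z \<le> fconj (fconj g) z"
proof (cases "z \<in> ineq_set B")
  case True
  obtain a b where ab: "(a, b) \<in> A" "max_affine A z = inner a z + b"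
    using max_affine_attained[OF A] by metis
  have gz: "g z = ereal (max_affine A z)" using True unfolding g_def piecewise_affine_def by simp
  have "a \<in> subdiff g z" unfolding subdiff_def
  proof (intro CollectI conjI allI)
    show "\<bar>g z\<bar> \<noteq> \<infinity>" using gz by simp
    fix y show "g z + ereal (inner a (y - z)) \<le> g y"
      using gz ab max_affine_ge[OF A(1) ab(1), of y]
      unfolding g_def piecewise_affine_def by (simp add: inner_diff_right)
  qed
  then have "fconj g a = ereal (inner a z - max_affine A z)"
    using subdiff_iff_fconj_eq[where g = g and z = z, OF gz] by simp
  then have "ereal (inner z a) - fconj g a = g z" using gz by (simp add: inner_commute)
  then show ?thesis using fenchel_young[of z a "fconj g"] by simp
next
  case False
  then show ?thesis using fconj_fconj_piecewise_affine_outside[OF A] unfolding g_def by simp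
qed

lemma polyhedral_fun_le_biconj:
  fixes g :: "'a::euclidean_space \<Rightarrow> ereal"
  assumes "polyhedral_fun g"
  shows "g z \<le> fconj (fconj g) z"
proof -
  obtain A B where "finite A" "A \<noteq> {}" "g = piecewise_affine A B"
    using polyhedral_fun_piecewise_affine[OF assms] by metis
  then show ?thesis using piecewise_affine_le_biconj by blast
qed

lemma fconj_piecewise_affine_le_iff:
  "fconj (piecewise_affine A B) l \<le> ereal s \<longleftrightarrow>
    (\<forall>x\<in>ineq_set B. inner l x - max_affine A x \<le> s)"
  unfolding fconj_le_iff
proof (intro iffI ballI allI)
  fix x assume "\<forall>z. ereal (inner l z) - piecewise_affine A B z \<le> ereal s" "x \<in> ineq_set B"
  then show "inner l x - max_affine A x \<le> s"
    unfolding piecewise_affine_def by (auto dest: spec[of _ x])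
next
  fix z assume "\<forall>x\<in>ineq_set B. inner l x - max_affine A x \<le> s"
  then show "ereal (inner l z) - piecewise_affine A B z \<le> ereal s"
    unfolding piecewise_affine_def by auto
qed

lemma closed_convex_cone_separation:
  fixes K :: "'a::euclidean_space set"
  assumes K: "convex_cone K" "closed K" and p: "p \<notin> K"
  obtains a where "\<And>y. y \<in> K \<Longrightarrow> 0 \<le> inner a y" "inner a p < 0"
proof -
  have "convex K" using K(1) unfolding convex_cone_def by blast
  then obtain a b where ab: "inner a p < b" "\<forall>y\<in>K. b < inner a y"
    using separating_hyperplane_closed_point[OF _ K(2) p] by blast
  have "b < 0" using ab(2) convex_cone_contains_0[OF K(1)] by force
  have nonneg: "0 \<le> inner a y" if "y \<in> K" for y
  proof (rule ccontr)
    assume "\<not> 0 \<le> inner a y"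
    then have neg: "inner a y < 0" by simp
    have "conic K" using K(1) unfolding convex_cone_def by blast
    then have "(b / inner a y) *\<^sub>R y \<in> K"
      using that neg \<open>b < 0\<close> by (intro conicD) (auto simp: divide_nonpos_neg)
    then have "b < inner a ((b / inner a y) *\<^sub>R y)" using ab(2) by blast
    then show False using neg by simp
  qed
  show ?thesis
  proof (rule that)
    show "0 \<le> inner a y" if "y \<in> K" for y using nonneg[OF that] .
    show "inner a p < 0" using ab(1) \<open>b < 0\<close> by simp
  qed
qed

lemma dual_certificate_violation_pos:
  fixes x l :: "'a::real_inner"
  assumes A: "finite A" "A \<noteq> {}" and \<alpha>: "0 < \<alpha>"
    and hA: "\<And>a b. (a, b) \<in> A \<Longrightarrow> 0 \<le> inner x a - \<alpha> * b + \<beta>"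
    and hB: "\<And>c d. (c, d) \<in> B \<Longrightarrow> 0 \<le> inner x c + \<alpha> * d"
    and hl: "inner x l + \<alpha> * s + \<beta> < 0"
  obtains y where "y \<in> ineq_set B" "s < inner l y - max_affine A y"
proof -
  define y where "y = (- (1 / \<alpha>)) *\<^sub>R x"
  have y: "y \<in> ineq_set B" unfolding ineq_set_def
  proof (clarify)
    fix c d assume cd: "(c, d) \<in> B"
    have le: "- inner x c \<le> d * \<alpha>" using hB[OF cd] by (simp add: algebra_simps)
    have "(- inner x c) / \<alpha> \<le> d" by (subst pos_divide_le_eq[OF \<alpha>]) (rule le)
    moreover have "inner c y = (- inner x c) / \<alpha>" unfolding y_def by (simp add: inner_commute)
    ultimately show "inner c y \<le> d" by simp
  qed
  have "max_affine A y \<le> \<beta> / \<alpha>"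
  proof (subst max_affine_le_iff[OF A], clarify)
    fix a b assume ab: "(a, b) \<in> A"
    have "inner a y + b = (\<alpha> * b - inner x a) / \<alpha>"
      unfolding y_def using \<alpha> by (simp add: inner_commute field_simps)
    also have "\<dots> \<le> \<beta> / \<alpha>" using hA[OF ab] \<alpha> by (intro divide_right_mono) auto
    finally show "inner a y + b \<le> \<beta> / \<alpha>" .
  qed
  moreover have "s + \<beta> / \<alpha> < inner l y"
  proof -
    have "(\<alpha> * s + \<beta>) / \<alpha> < - inner x l / \<alpha>" using hl \<alpha> by (intro divide_strict_right_mono) auto
    moreover have "(\<alpha> * s + \<beta>) / \<alpha> = s + \<beta> / \<alpha>" using \<alpha> by (simp add: field_simps)
    moreover have "inner l y = - inner x l / \<alpha>" unfolding y_def by (simp add: inner_commute)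
    ultimately show ?thesis by simp
  qed
  ultimately have "s < inner l y - max_affine A y" by simp
  with y show ?thesis by (rule that)
qed

lemma dual_certificate_violation_recession:
  fixes x l :: "'a::real_inner"
  assumes A: "finite A" "A \<noteq> {}" and x0: "x0 \<in> ineq_set B"
    and hA: "\<And>a b. (a, b) \<in> A \<Longrightarrow> 0 \<le> inner x a + \<beta>"
    and hB: "\<And>c d. (c, d) \<in> B \<Longrightarrow> 0 \<le> inner x c"
    and hl: "inner x l + \<beta> < 0"
  obtains y where "y \<in> ineq_set B" "s < inner l y - max_affine A y"
proof -
  define k where "k = (\<bar>s - inner l x0 + max_affine A x0\<bar> + 1) / (- inner x l - \<beta>)"
  have k: "0 \<le> k" "k * (- inner x l - \<beta>) = \<bar>s - inner l x0 + max_affine A x0\<bar> + 1"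
    unfolding k_def using hl by simp_all
  define y where "y = x0 - k *\<^sub>R x"
  have y: "y \<in> ineq_set B" unfolding ineq_set_def
  proof (clarify)
    fix c d assume cd: "(c, d) \<in> B"
    have "inner c x0 \<le> d" using x0 cd unfolding ineq_set_def by auto
    moreover have "0 \<le> k * inner x c" using hB[OF cd] k(1) by simp
    ultimately show "inner c y \<le> d" unfolding y_def by (simp add: inner_diff_right inner_commute)
  qed
  have "max_affine A y \<le> max_affine A x0 + k * \<beta>"
  proof (subst max_affine_le_iff[OF A], clarify)
    fix a b assume ab: "(a, b) \<in> A"
    have "inner a x0 + b \<le> max_affine A x0" by (rule max_affine_ge[OF A(1) ab])
    moreover have "- k * inner x a \<le> k * \<beta>" using mult_nonneg_nonneg[OF k(1) hA[OF ab]]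
      by (simp add: algebra_simps)
    ultimately show "inner a y + b \<le> max_affine A x0 + k * \<beta>"
      unfolding y_def by (simp add: inner_diff_right inner_commute)
  qed
  then have "inner l x0 - max_affine A x0 + k * (- inner x l - \<beta>) \<le> inner l y - max_affine A y"
    unfolding y_def by (simp add: inner_commute algebra_simps)
  then have "s < inner l y - max_affine A y" using k(2) by linarith
  with y show ?thesis by (rule that)
qed

text \<open>The epigraph of the conjugate of \<open>piecewise_affine A B\<close> is the slice at
  height one of the cone generated by the vertices \<open>(a, -b, 1)\<close> and the directions
  \<open>(c, d, 0)\<close> and \<open>(0, 1, 0)\<close>.\<close>
definition conj_generators ::
    "('a::real_inner \<times> real) set \<Rightarrow> ('a \<times> real) set \<Rightarrow> ('a \<times> real \<times> real) set" where
  "conj_generators A B =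
     (\<lambda>(a, b). (a, - b, 1)) ` A \<union> (\<lambda>(c, d). (c, d, 0)) ` B \<union> {(0, 1, 0)}"

lemma fconj_piecewise_affine_le_if_generated:
  fixes A B :: "('a::euclidean_space \<times> real) set"
  assumes A: "finite A" and gen: "(l, s, 1) \<in> convex_cone hull conj_generators A B"
  shows "fconj (piecewise_affine A B) l \<le> ereal s"
proof -
  define H where "H x = {p. inner (x, - 1 :: real, - max_affine A x) p \<le> 0}" for x
  define E where "E = \<Inter> (insert {p. inner (0::'a, 0::real, - 1::real) p \<le> 0} (H ` ineq_set B))"
  have E: "(l', s', t) \<in> E \<longleftrightarrow>
      0 \<le> t \<and> (\<forall>x\<in>ineq_set B. inner x l' - s' - max_affine A x * t \<le> 0)" for l' s' t
    unfolding E_def H_def by auto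
  have "convex_cone E" unfolding E_def H_def
    by (intro convex_cone_Inter) (auto intro: convex_cone_halfspace_le)
  moreover have "conj_generators A B \<subseteq> E"
  proof -
    have "inner x a + b - max_affine A x \<le> 0" if "(a, b) \<in> A" for x a b
      using max_affine_ge[OF A that, of x] by (simp add: inner_commute)
    moreover have "inner x c - d \<le> 0" if "(c, d) \<in> B" "x \<in> ineq_set B" for x c d
    proof -
      have "\<forall>(c', d')\<in>B. inner c' x \<le> d'" using that(2) unfolding ineq_set_def by simp
      then have "inner c x \<le> d" using that(1) by blast
      then show ?thesis by (simp add: inner_commute)
    qed
    ultimately show ?thesis unfolding conj_generators_def by (auto simp: E)
  qed
  ultimately have "convex_cone hull conj_generators A B \<subseteq> E" by (rule hull_minimal[rotated])
  then have "(l, s, 1) \<in> E" using gen by blast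
  then have "\<forall>x\<in>ineq_set B. inner x l - s - max_affine A x \<le> 0" unfolding E by simp
  then have "\<forall>x\<in>ineq_set B. inner l x - max_affine A x \<le> s" by (auto simp: inner_commute)
  then show ?thesis by (simp add: fconj_piecewise_affine_le_iff)
qed

lemma generated_if_fconj_piecewise_affine_le:
  fixes A B :: "('a::euclidean_space \<times> real) set"
  assumes A: "finite A" "A \<noteq> {}" and B: "finite B" and x0: "x0 \<in> ineq_set B"
    and le: "fconj (piecewise_affine A B) l \<le> ereal s"
  shows "(l, s, 1) \<in> convex_cone hull conj_generators A B"
proof (rule ccontr)
  assume "(l, s, 1) \<notin> convex_cone hull conj_generators A B"
  moreover have "finite (conj_generators A B)" unfolding conj_generators_def using A B by simp
  ultimately obtain p where p: "\<And>y. y \<in> convex_cone hull conj_generators A B \<Longrightarrow> 0 \<le> inner p y"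
      "inner p (l, s, 1) < 0"
    using closed_convex_cone_separation[OF convex_cone_convex_cone_hull]
      polyhedron_imp_closed polyhedron_convex_cone_hull by metis
  obtain x \<alpha> \<beta> where p_eq: "p = (x, \<alpha>, \<beta>)" by (cases p)
  have gen: "0 \<le> inner p y" if "y \<in> conj_generators A B" for y
    using p(1) hull_subset[of "conj_generators A B" convex_cone] that by blast
  have hA: "0 \<le> inner x a - \<alpha> * b + \<beta>" if "(a, b) \<in> A" for a b
  proof -
    have "(a, - b, 1) \<in> conj_generators A B" unfolding conj_generators_def
      by (rule UnI1, rule UnI1, rule image_eqI[of _ _ "(a, b)"]) (simp_all add: that)
    then show ?thesis using gen p_eq by fastforce
  qed
  have hB: "0 \<le> inner x c + \<alpha> * d" if "(c, d) \<in> B" for c d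
  proof -
    have "(c, d, 0) \<in> conj_generators A B" unfolding conj_generators_def
      by (rule UnI1, rule UnI2, rule image_eqI[of _ _ "(c, d)"]) (simp_all add: that)
    then show ?thesis using gen p_eq by fastforce
  qed
  have "(0, 1, 0) \<in> conj_generators A B" unfolding conj_generators_def by simp
  then have "0 \<le> \<alpha>" using gen p_eq by fastforce
  have hl: "inner x l + \<alpha> * s + \<beta> < 0" using p(2) unfolding p_eq by simp
  obtain y where "y \<in> ineq_set B" "s < inner l y - max_affine A y"
  proof (cases "\<alpha> = 0")
    case True
    then show ?thesis
      using dual_certificate_violation_recession[OF A x0, of x \<beta> l s] hA hB hl that by auto
  next
    case False
    then show ?thesis
      using dual_certificate_violation_pos[OF A, of \<alpha> x \<beta> B l s] hA hB hl that \<open>0 \<le> \<alpha>\<close> by auto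
  qed
  then show False using le by (auto simp: fconj_piecewise_affine_le_iff not_le)
qed

lemma polyhedron_slice:
  fixes T :: "('a::euclidean_space \<times> real \<times> real) set"
  assumes "polyhedron T"
  shows "polyhedron {p :: 'a \<times> real. (fst p, snd p, 1) \<in> T}"
proof -
  obtain F where F: "finite F" "T = \<Inter>F" "\<forall>h\<in>F. \<exists>a b. a \<noteq> 0 \<and> h = {x. inner a x \<le> b}"
    using assms unfolding polyhedron_def by blast
  have eq: "{p :: 'a \<times> real. (fst p, snd p, 1) \<in> T} =
      \<Inter> ((\<lambda>h. {p :: 'a \<times> real. (fst p, snd p, 1) \<in> h}) ` F)"
    unfolding F(2) by (simp add: set_eq_iff)
  have "polyhedron {p :: 'a \<times> real. (fst p, snd p, 1) \<in> h}" if "h \<in> F" for h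
  proof -
    from bspec[OF F(3) that] obtain a b where h: "h = {x. inner a x \<le> b}" by blast
    obtain a1 a2 a3 where a: "a = (a1, a2, a3)" by (cases a)
    have "{p :: 'a \<times> real. (fst p, snd p, 1) \<in> h} = {p. inner (a1, a2) p \<le> b - a3}"
    proof (rule set_eqI)
      fix p :: "'a \<times> real"
      obtain x q where p: "p = (x, q)" by (cases p)
      show "p \<in> {p. (fst p, snd p, 1) \<in> h} \<longleftrightarrow> p \<in> {p. inner (a1, a2) p \<le> b - a3}"
        unfolding h p a by (simp add: algebra_simps)
    qed
    then show ?thesis using polyhedron_halfspace_le by simp
  qed
  then show ?thesis unfolding eq using F(1) by (intro polyhedron_Inter) auto
qed

theorem polyhedral_fun_fconj:
  fixes g :: "'a::euclidean_space \<Rightarrow> ereal"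
  assumes "polyhedral_fun g"
  shows "polyhedral_fun (fconj g)"
proof -
  obtain A B where A: "finite A" "A \<noteq> {}" and B: "finite B" "ineq_set B \<noteq> {}"
      and g: "g = piecewise_affine A B"
    using polyhedral_fun_piecewise_affine[OF assms] by metis
  obtain x0 where x0: "x0 \<in> ineq_set B" using B(2) by blast
  obtain a b where ab: "(a, b) \<in> A" using A(2) by auto
  have "fconj g l \<noteq> - \<infinity>" for l
    using fenchel_young[of l x0 g] x0 unfolding g piecewise_affine_def by auto
  moreover have "fconj g a \<le> ereal (- b)"
    using max_affine_ge[OF A(1) ab] unfolding g fconj_piecewise_affine_le_iff
      by (auto simp: algebra_simps)
  then have "fconj g a \<noteq> \<infinity>" by auto
  ultimately have "proper_fun (fconj g)" unfolding proper_fun_def by blast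
  moreover have "epi (fconj g) = {p. (fst p, snd p, 1) \<in> convex_cone hull conj_generators A B}"
    using fconj_piecewise_affine_le_if_generated[OF A(1)]
      generated_if_fconj_piecewise_affine_le[OF A B(1) x0]
    unfolding g epi_def by auto
  moreover have "polyhedron (convex_cone hull conj_generators A B)"
    using A B unfolding conj_generators_def by (intro polyhedron_convex_cone_hull) simp
  ultimately show ?thesis unfolding polyhedral_fun_def using polyhedron_slice by simp
qed

lemma polyhedral_subdiff_fconj_iff:
  fixes g :: "'a::euclidean_space \<Rightarrow> ereal"
  assumes "polyhedral_fun g"
  shows "z \<in> subdiff (fconj g) l \<longleftrightarrow> l \<in> subdiff g z"
  using subdiff_fconj_iff polyhedral_fun_le_biconj assms unfolding polyhedral_fun_def by blast

text \<open>Near \<open>zb\<close>, the subdifferential of the conjugate at \<open>lb\<close> is \<open>zb\<close> plus the normal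
  cone of \<open>\<partial>g zb\<close> at \<open>lb\<close>, and relative interiors are local.\<close>
theorem polyhedral_rel_interior_subdiff_fconj_iff:
  fixes g :: "'a::euclidean_space \<Rightarrow> ereal"
  assumes poly: "polyhedral_fun g" and lb: "lb \<in> subdiff g zb"
  shows "lb \<in> rel_interior (subdiff g zb) \<longleftrightarrow> zb \<in> rel_interior (subdiff (fconj g) lb)"
proof -
  obtain F r where M: "support_model g zb F r" using polyhedral_fun_support_model[OF poly lb] .
  have F: "subdiff g zb = F" "convex F" "0 < r" using support_model_subdiff[OF M] M
    unfolding support_model_def by auto
  define G where "G = subdiff (fconj g) lb"
  define T where "T = (\<lambda>u. zb + u) ` normal_cone F lb"
  have lbF: "lb \<in> F" using lb F(1) by simp
  have zbG: "zb \<in> G" unfolding G_def using polyhedral_subdiff_fconj_iff[OF poly] lb by simp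
  have zbT: "zb \<in> T" unfolding T_def using zero_in_normal_cone by force
  have near: "G \<inter> ball zb r = T \<inter> ball zb r"
  proof (intro set_eqI iffI)
    fix z assume "z \<in> G \<inter> ball zb r"
    then have "lb \<in> subdiff g (zb + (z - zb))" "norm (z - zb) < r"
      using polyhedral_subdiff_fconj_iff[OF poly] unfolding G_def
        by (auto simp: dist_norm norm_minus_commute)
    then have "z - zb \<in> normal_cone F lb" using support_model_subdiff_iff[OF M] by blast
    then show "z \<in> T \<inter> ball zb r" using \<open>z \<in> G \<inter> ball zb r\<close> unfolding T_def by force
  next
    fix z assume z: "z \<in> T \<inter> ball zb r"
    then have "z - zb \<in> normal_cone F lb" "norm (z - zb) < r"
      unfolding T_def by (auto simp: dist_norm norm_minus_commute)
    then have "lb \<in> subdiff g (zb + (z - zb))" using support_model_subdiff_iff[OF M] lbF by blast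
    then show "z \<in> G \<inter> ball zb r"
      using z polyhedral_subdiff_fconj_iff[OF poly] unfolding G_def by simp
  qed
  have cvx: "convex G" "convex T" unfolding G_def T_def
    by (simp_all add: convex_subdiff convex_normal_cone)
  have "zb \<in> rel_interior G \<longleftrightarrow> zb \<in> rel_interior T"
    using rel_interior_transfer_near[OF cvx zbG F(3) near]
      rel_interior_transfer_near[OF cvx(2,1) zbT F(3) near[symmetric]] by blast
  also have "\<dots> \<longleftrightarrow> 0 \<in> rel_interior (normal_cone F lb)"
    unfolding T_def rel_interior_translation
      by (metis (no_types, lifting) add_0_right add_left_imp_eq image_iff)
  also have "\<dots> \<longleftrightarrow> lb \<in> rel_interior F"
    using rel_interior_iff_zero_rel_interior_normal_cone[OF F(2) lbF] by simp
  finally show ?thesis unfolding G_def F(1) by simp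
qed

theorem corollary4p4:
  fixes g :: "'a::euclidean_space \<Rightarrow> ereal" and zb lb :: 'a
  assumes "polyhedral_fun g"
    and "(zb, lb) \<in> gph_subdiff g"
  shows "((\<exists>N. open N \<and> (zb, lb) \<in> N \<and>
             (\<forall>z l. (z, l) \<in> N \<inter> gph_subdiff g \<longrightarrow> strictly_twice_epi_diff g z l))
          \<longleftrightarrow>
          (\<exists>U. open U \<and> (lb, zb) \<in> U \<and>
             (\<forall>l z. (l, z) \<in> U \<inter> gph_subdiff (fconj g) \<longrightarrow> strictly_twice_epi_diff (fconj g) l z)))
       \<and> ((\<exists>U. open U \<and> (lb, zb) \<in> U \<and>
             (\<forall>l z. (l, z) \<in> U \<inter> gph_subdiff (fconj g) \<longrightarrow> strictly_twice_epi_diff (fconj g) l z))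
          \<longleftrightarrow> lb \<in> rel_interior (subdiff g zb))
       \<and> (lb \<in> rel_interior (subdiff g zb) \<longleftrightarrow> zb \<in> rel_interior (subdiff (fconj g) lb))"
proof -
  have lb: "lb \<in> subdiff g zb" using assms(2) unfolding gph_subdiff_def by simp
  have conj: "polyhedral_fun (fconj g)" by (rule polyhedral_fun_fconj[OF assms(1)])
  have gph: "(lb, zb) \<in> gph_subdiff (fconj g)"
    using polyhedral_subdiff_fconj_iff[OF assms(1)] lb unfolding gph_subdiff_def by simp
  note a_iff_c = polyhedral_strictly_twice_epi_diff_near_iff[OF assms]
  note b_iff_d = polyhedral_strictly_twice_epi_diff_near_iff[OF conj gph]
  note c_iff_d = polyhedral_rel_interior_subdiff_fconj_iff[OF assms(1) lb]
  show ?thesis using a_iff_c b_iff_d c_iff_d by blast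
qed

end
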